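(* If the microstructure is a periodic dispersion of inclusions or a layered material, then for $i=1,2$ $$\sup_{\epsilon>0}\int_\Omega\chi_i^\epsilon(x)\big|P_\epsilon(x,M_\epsilon\nabla u(x))\big|^{p_i}dx\le C<\infty.$$
   Context: Standing setup. $Y=(0,1)^n$, $\Omega\subset\mathbb R^n$ bounded open; $\chi_1$ a $Y$-periodic indicator, $\chi_2=1-\chi_1$; $0<\sigma_1,\sigma_2<\infty$; $1<p_1\le p_2\le2$ or $1<p_1\le2\le p_2$; $q_2=p_1/(p_1-1)$. $A(y,\xi)=\sigma(y)|\xi|^{p(y)-2}\xi$ with $\sigma=\chi_1\sigma_1+\chi_2\sigma_2$, $p=\chi_1p_1+\chi_2p_2$. $W^{1,p}_{per}(Y)$: mean-zero $W^{1,p}(Y)$ functions with equal traces on opposite faces. $v_\xi\in W^{1,p_1}_{per}(Y)$ solves $\int_Y(A(y,\xi+\nabla v_\xi),\nabla w)dy=0$ for all $w$; $P(y,\xi)=\xi+\nabla v_\xi(y)$ ($Y$-periodic), $P_\epsilon(x,\xi)=P(x/\epsilon,\xi)$; $b(\xi)=\int_YA(y,P(y,\xi))dy$; $\chi_i^\epsilon(x)=\chi_i(x/\epsilon)$. Given $f\in W^{-1,q_2}(\Omega)$, $u\in W^{1,p_1}_0(\Omega)$ is the weak solution of $-\operatorname{div}b(\nabla u)=f$. Dispersed: $\chi_1$ is the periodic extension of the indicator of an open simply connected smooth $F$ with $\overline F\subset Y$; layered: $\chi_1(y)=1$ iff $a<y_1<b$ (mod 1), $0<a<b<1$. For these microstructures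 it is known that $u\in W^{1,p_2}_0(\Omega)$. $M_\epsilon$: with $Y^k_\epsilon=\epsilon k+(0,\epsilon)^n$, $I_\epsilon=\{k:Y^k_\epsilon\subset\Omega\}$, $M_\epsilon\varphi$ is the average of $\varphi$ over $Y^k_\epsilon$ on $Y^k_\epsilon$ ($k\in I_\epsilon$) and $0$ elsewhere. *)

theory Defs
  imports "HOL-Analysis.Analysis"
begin

type_synonym 'n pt = "real ^ 'n"

fun Ck_on :: "nat \<Rightarrow> ('n::finite) pt set \<Rightarrow> ('n pt \<Rightarrow> real) \<Rightarrow> bool" where
  "Ck_on 0 S f = continuous_on S f"
| "Ck_on (Suc k) S f =
     (continuous_on S f \<and>
      (\<exists>G. (\<forall>x\<in>S. (f has_derivative (\<lambda>h. G x \<bullet> h)) (at x)) \<and>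
           (\<forall>j. Ck_on k S (\<lambda>x. G x $ j))))"

definition smooth_on :: "('n::finite) pt set \<Rightarrow> ('n pt \<Rightarrow> real) \<Rightarrow> bool" where
  "smooth_on S f \<longleftrightarrow> (\<forall>k. Ck_on k S f)"

definition grad :: "(('n::finite) pt \<Rightarrow> real) \<Rightarrow> 'n pt \<Rightarrow> 'n pt" where
  "grad f x = (\<chi> j. frechet_derivative f (at x) (axis j 1))"

definition test_fun :: "('n::finite) pt set \<Rightarrow> ('n pt \<Rightarrow> real) \<Rightarrow> bool" where
  "test_fun U \<phi> \<longleftrightarrow> smooth_on UNIV \<phi> \<and> compact (closure {x. \<phi> x \<noteq> 0})
      \<and> closure {x. \<phi> x \<noteq> 0} \<subseteq> U"

definition loc_int :: "('n::finite) pt set \<Rightarrow> ('n pt \<Rightarrow> 'b::{banach,second_countable_topology}) \<Rightarrow> bool" where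
  "loc_int U f \<longleftrightarrow> (\<forall>K. compact K \<and> K \<subseteq> U \<longrightarrow> set_integrable lebesgue K f)"

definition weak_grad :: "('n::finite) pt set \<Rightarrow> ('n pt \<Rightarrow> real) \<Rightarrow> ('n pt \<Rightarrow> 'n pt) \<Rightarrow> bool" where
  "weak_grad U f g \<longleftrightarrow> loc_int U f \<and> loc_int U g \<and>
     (\<forall>\<phi>. test_fun U \<phi> \<longrightarrow> (\<forall>j.
        (LINT x:U|lebesgue. f x * grad \<phi> x $ j) = - (LINT x:U|lebesgue. g x $ j * \<phi> x)))"

definition Lp :: "real \<Rightarrow> ('n::finite) pt set \<Rightarrow> ('n pt \<Rightarrow> 'b::{banach,second_countable_topology}) \<Rightarrow> bool" where
  "Lp p U f \<longleftrightarrow> set_borel_measurable lebesgue U f \<and>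
     set_integrable lebesgue U (\<lambda>x. norm (f x) powr p)"

definition W1p :: "real \<Rightarrow> ('n::finite) pt set \<Rightarrow> ('n pt \<Rightarrow> real) \<Rightarrow> ('n pt \<Rightarrow> 'n pt) \<Rightarrow> bool" where
  "W1p p U f g \<longleftrightarrow> weak_grad U f g \<and> Lp p U f \<and> Lp p U g"

definition W1p0 :: "real \<Rightarrow> ('n::finite) pt set \<Rightarrow> ('n pt \<Rightarrow> real) \<Rightarrow> ('n pt \<Rightarrow> 'n pt) \<Rightarrow> bool" where
  "W1p0 p U f g \<longleftrightarrow> W1p p U f g \<and>
     (\<exists>\<phi>. (\<forall>m. test_fun U (\<phi> m)) \<and>
        ((\<lambda>m. LINT x:U|lebesgue. \<bar>\<phi> m x - f x\<bar> powr p) \<longlonglongrightarrow> 0) \<and>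
        ((\<lambda>m. LINT x:U|lebesgue. norm (grad (\<phi> m) x - g x) powr p) \<longlonglongrightarrow> 0))"

definition W1p_norm :: "real \<Rightarrow> ('n::finite) pt set \<Rightarrow> ('n pt \<Rightarrow> real) \<Rightarrow> ('n pt \<Rightarrow> 'n pt) \<Rightarrow> real" where
  "W1p_norm p U f g = (LINT x:U|lebesgue. \<bar>f x\<bar> powr p) powr (1/p)
                     + (LINT x:U|lebesgue. norm (g x) powr p) powr (1/p)"

definition Ycell :: "('n::finite) pt set" where
  "Ycell = {y. \<forall>i. 0 < y $ i \<and> y $ i < 1}"

definition intvec :: "('n::finite \<Rightarrow> int) \<Rightarrow> 'n pt" where
  "intvec k = (\<chi> i. of_int (k i))"

definition Y_periodic :: "(('n::finite) pt \<Rightarrow> 'b) \<Rightarrow> bool" where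
  "Y_periodic f \<longleftrightarrow> (\<forall>x j. f (x + axis j 1) = f x)"

text \<open>phase 1 is the set E (chi_1 = indicator E), phase 2 its complement\<close>
definition pexp :: "('n::finite) pt set \<Rightarrow> real \<Rightarrow> real \<Rightarrow> 'n pt \<Rightarrow> real" where
  "pexp E p1 p2 y = (if y \<in> E then p1 else p2)"

definition sig :: "('n::finite) pt set \<Rightarrow> real \<Rightarrow> real \<Rightarrow> 'n pt \<Rightarrow> real" where
  "sig E s1 s2 y = (if y \<in> E then s1 else s2)"

definition Aop :: "('n::finite) pt set \<Rightarrow> real \<Rightarrow> real \<Rightarrow> real \<Rightarrow> real \<Rightarrow> 'n pt \<Rightarrow> 'n pt \<Rightarrow> 'n pt" where
  "Aop E s1 s2 p1 p2 y \<xi> = (sig E s1 s2 y * norm \<xi> powr (pexp E p1 p2 y - 2)) *\<^sub>R \<xi>"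

definition per_space :: "('n::finite) pt set \<Rightarrow> real \<Rightarrow> real \<Rightarrow> ('n pt \<Rightarrow> real) \<Rightarrow> ('n pt \<Rightarrow> 'n pt) \<Rightarrow> bool" where
  "per_space E p1 p2 w Dw \<longleftrightarrow> Y_periodic w \<and> weak_grad UNIV w Dw \<and>
     W1p p1 Ycell w Dw \<and> (LINT y:Ycell|lebesgue. w y) = 0 \<and>
     set_integrable lebesgue Ycell (\<lambda>y. norm (Dw y) powr pexp E p1 p2 y)"

definition cell_solutions :: "('n::finite) pt set \<Rightarrow> real \<Rightarrow> real \<Rightarrow> real \<Rightarrow> real
     \<Rightarrow> ('n pt \<Rightarrow> 'n pt \<Rightarrow> real) \<Rightarrow> ('n pt \<Rightarrow> 'n pt \<Rightarrow> 'n pt) \<Rightarrow> bool" where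
  "cell_solutions E s1 s2 p1 p2 v Dv \<longleftrightarrow> (\<forall>\<xi>. per_space E p1 p2 (v \<xi>) (Dv \<xi>) \<and>
     (\<forall>w Dw. per_space E p1 p2 w Dw \<longrightarrow>
        (LINT y:Ycell|lebesgue. Aop E s1 s2 p1 p2 y (\<xi> + Dv \<xi> y) \<bullet> Dw y) = 0))"

definition bhom :: "('n::finite) pt set \<Rightarrow> real \<Rightarrow> real \<Rightarrow> real \<Rightarrow> real
     \<Rightarrow> ('n pt \<Rightarrow> 'n pt \<Rightarrow> 'n pt) \<Rightarrow> 'n pt \<Rightarrow> 'n pt" where
  "bhom E s1 s2 p1 p2 Dv \<xi> = (LINT y:Ycell|lebesgue. Aop E s1 s2 p1 p2 y (\<xi> + Dv \<xi> y))"

definition smooth_boundary :: "('n::finite) pt set \<Rightarrow> bool" where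
  "smooth_boundary F \<longleftrightarrow> (\<forall>z\<in>frontier F. \<exists>r>0. \<exists>\<phi>. smooth_on UNIV \<phi> \<and> grad \<phi> z \<noteq> 0 \<and>
      F \<inter> ball z r = {x \<in> ball z r. \<phi> x < 0})"

definition dispersed :: "('n::finite) pt set \<Rightarrow> bool" where
  "dispersed E \<longleftrightarrow> (\<exists>F. open F \<and> simply_connected F \<and> smooth_boundary F \<and>
      closure F \<subseteq> Ycell \<and> E = (\<Union>k. (\<lambda>y. y + intvec k) ` F))"

text \<open>layered in the direction of coordinate i0 (the paper uses i0 = 1)\<close>
definition layered :: "('n::finite) pt set \<Rightarrow> bool" where
  "layered E \<longleftrightarrow> (\<exists>(i0::'n) a b. 0 < a \<and> a < b \<and> b < 1 \<and>
      E = {y. a < frac (y $ i0) \<and> frac (y $ i0) < b})"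

definition eps_cell :: "real \<Rightarrow> (('n::finite) \<Rightarrow> int) \<Rightarrow> 'n pt set" where
  "eps_cell \<epsilon> k = {x. \<forall>i. \<epsilon> * of_int (k i) < x $ i \<and> x $ i < \<epsilon> * (of_int (k i) + 1)}"

definition Mavg :: "('n::finite) pt set \<Rightarrow> real \<Rightarrow> ('n pt \<Rightarrow> 'n pt) \<Rightarrow> 'n pt \<Rightarrow> 'n pt" where
  "Mavg \<Omega> \<epsilon> g x =
     (if \<exists>k. eps_cell \<epsilon> k \<subseteq> \<Omega> \<and> x \<in> eps_cell \<epsilon> k
      then (let k = (SOME k. eps_cell \<epsilon> k \<subseteq> \<Omega> \<and> x \<in> eps_cell \<epsilon> k)
            in (1 / \<epsilon> ^ CARD('n)) *\<^sub>R (LINT y:eps_cell \<epsilon> k|lebesgue. g y))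
      else 0)"

end

theory Submission
  imports Defs "HOL-Computational_Algebra.Polynomial"
begin

(* For a fixed vector xi, testing the cell problem with the corrector v xi itself
   and applying Young's inequality pointwise gives the cell energy estimate
       int_Y |xi + Dv xi|^p(y) dy  <=  K (|xi|^p1 + |xi|^p2).
   The gradient Dv xi of the periodic function v xi is periodic almost everywhere; this is
   uniqueness of weak gradients, i.e. the fundamental lemma of the calculus of variations,
   proved with smooth product bumps approximating indicators of boxes.  Rescaling, the same
   estimate multiplied by eps^n holds on every eps-cell.  On an eps-cell inside Omega the
   averaged gradient M_eps Du is the constant mean xi of Du, and Jensen's inequality gives
   eps^n |xi|^p <= int_cell |Du|^p; on the remaining cells M_eps Du = 0 and the estimate is
   trivial.  Summing over the finitely many cells meeting Omega bounds both integrals of the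
   theorem by K (||Du||_p1^p1 + ||Du||_p2^p2), uniformly in eps. *)

section \<open>Smooth bump functions\<close>

fun Ck_real :: "nat \<Rightarrow> (real \<Rightarrow> real) \<Rightarrow> bool" where
  "Ck_real 0 h = continuous_on UNIV h"
| "Ck_real (Suc k) h = (continuous_on UNIV h \<and>
     (\<exists>h'. (\<forall>t. (h has_real_derivative h' t) (at t)) \<and> Ck_real k h'))"

lemma Ck_real_mono: "Ck_real (Suc k) h \<Longrightarrow> Ck_real k h"
proof (induction k arbitrary: h)
  case (Suc k)
  then obtain h' where "\<forall>t. (h has_real_derivative h' t) (at t)" "Ck_real (Suc k) h'"
    "continuous_on UNIV h" by auto
  with Suc.IH show ?case by auto
qed simp

lemma Ck_real_const: "Ck_real k (\<lambda>t. c)"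
proof (induction k arbitrary: c)
  case (Suc k)
  have "\<forall>t. ((\<lambda>t. c) has_real_derivative (\<lambda>t. 0) t) (at t)" by (auto intro!: derivative_eq_intros)
  with Suc show ?case by (auto intro!: exI[of _ "\<lambda>t. 0"])
qed simp

lemma Ck_real_add: "Ck_real k f \<Longrightarrow> Ck_real k g \<Longrightarrow> Ck_real k (\<lambda>t. f t + g t)"
proof (induction k arbitrary: f g)
  case 0 then show ?case by (auto intro!: continuous_intros)
next
  case (Suc k)
  from Suc.prems obtain f' g' where f': "\<forall>t. (f has_real_derivative f' t) (at t)" "Ck_real k f'"
     and g': "\<forall>t. (g has_real_derivative g' t) (at t)" "Ck_real k g'"
     and c: "continuous_on UNIV f" "continuous_on UNIV g" by auto
  have "\<forall>t. ((\<lambda>t. f t + g t) has_real_derivative (f' t + g' t)) (at t)"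
    using f' g' by (auto intro!: derivative_eq_intros)
  with Suc.IH[OF f'(2) g'(2)] c show ?case
    by (auto intro!: continuous_intros exI[of _ "\<lambda>t. f' t + g' t"])
qed

lemma Ck_real_mult: "Ck_real k f \<Longrightarrow> Ck_real k g \<Longrightarrow> Ck_real k (\<lambda>t. f t * g t)"
proof (induction k arbitrary: f g)
  case 0 then show ?case by (auto intro!: continuous_intros)
next
  case (Suc k)
  from Suc.prems obtain f' g' where f': "\<forall>t. (f has_real_derivative f' t) (at t)" "Ck_real k f'"
     and g': "\<forall>t. (g has_real_derivative g' t) (at t)" "Ck_real k g'"
     and c: "continuous_on UNIV f" "continuous_on UNIV g" by auto
  have "\<forall>t. ((\<lambda>t. f t * g t) has_real_derivative (f' t * g t + f t * g' t)) (at t)"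
    using f' g' by (auto intro!: derivative_eq_intros)
  moreover have "Ck_real k (\<lambda>t. f' t * g t + f t * g' t)"
    using Suc.IH[OF f'(2) Ck_real_mono[OF Suc.prems(2)]] Suc.IH[OF Ck_real_mono[OF Suc.prems(1)] g'(2)]
    by (rule Ck_real_add)
  ultimately show ?case using c by (auto intro!: continuous_intros)
qed

lemma Ck_real_affine: "Ck_real k h \<Longrightarrow> Ck_real k (\<lambda>t. h (c * t + d))"
proof (induction k arbitrary: h)
  case 0 then show ?case
    by (auto intro!: continuous_on_compose2[of UNIV h] continuous_intros)
next
  case (Suc k)
  from Suc.prems obtain h' where h': "\<forall>t. (h has_real_derivative h' t) (at t)" "Ck_real k h'"
     and c: "continuous_on UNIV h" by auto
  have "\<forall>t. ((\<lambda>t. h (c * t + d)) has_real_derivative (h' (c * t + d) * c)) (at t)"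
    using h' by (auto intro!: derivative_eq_intros DERIV_chain2[of h])
  moreover have "Ck_real k (\<lambda>t. h' (c * t + d) * c)"
    by (rule Ck_real_mult[OF Suc.IH[OF h'(2)] Ck_real_const])
  moreover have "continuous_on UNIV (\<lambda>t. h (c * t + d))"
    using c by (auto intro!: continuous_on_compose2[of UNIV h] continuous_intros)
  ultimately show ?case by auto
qed

text \<open>This class is closed under differentiation, so all of them are \<open>C\<^sup>\<infinity>\<close>;
  the case \<open>P = 1\<close> is the classical smooth cut-off.\<close>
definition exp_cutoff :: "real poly \<Rightarrow> real \<Rightarrow> real" where
  "exp_cutoff p t = (if t > 0 then poly p (1/t) * exp (- (1/t)) else 0)"

definition exp_cutoff_deriv :: "real poly \<Rightarrow> real poly" where
  "exp_cutoff_deriv p = monom 1 2 * (p - pderiv p)"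

lemma poly_exp_lim: "((\<lambda>s. s ^ m * poly p s * exp (- s)) \<longlongrightarrow> (0::real)) at_top"
proof (induction p arbitrary: m)
  case (pCons a p)
  have e: "s ^ m * poly (pCons a p) s * exp (- s)
      = a * (s ^ m / exp s) + s ^ Suc m * poly p s * exp (- s)" for s
    by (simp add: exp_minus field_simps)
  have "((\<lambda>s. a * (s ^ m / exp s) + s ^ Suc m * poly p s * exp (- s)) \<longlongrightarrow> a * 0 + 0) at_top"
    by (intro tendsto_intros tendsto_power_div_exp_0 pCons.IH)
  then show ?case unfolding e by simp
qed simp

lemma exp_cutoff_deriv0: "(exp_cutoff p has_real_derivative 0) (at 0)"
  unfolding has_field_derivative_iff
proof (subst filterlim_at_split, rule conjI)
  show "((\<lambda>y. (exp_cutoff p y - exp_cutoff p 0) / (y - 0)) \<longlongrightarrow> 0) (at_left 0)"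
  proof (rule Lim_transform_eventually[OF tendsto_const])
    show "eventually (\<lambda>y. 0 = (exp_cutoff p y - exp_cutoff p 0) / (y - 0)) (at_left (0::real))"
      unfolding eventually_at_left_field by (auto simp: exp_cutoff_def intro!: exI[of _ "-1"])
  qed
  have "((\<lambda>s. s ^ 1 * poly p s * exp (- s)) \<longlongrightarrow> (0::real)) at_top" by (rule poly_exp_lim)
  from filterlim_compose[OF this filterlim_inverse_at_top_right]
  have "((\<lambda>t. inverse t ^ 1 * poly p (inverse t) * exp (- inverse t)) \<longlongrightarrow> 0) (at_right (0::real))" .
  moreover have "eventually (\<lambda>t. inverse t ^ 1 * poly p (inverse t) * exp (- inverse t)
      = (exp_cutoff p t - exp_cutoff p 0) / (t - 0)) (at_right (0::real))"
    unfolding eventually_at_right_field by (auto simp: exp_cutoff_def field_simps intro!: exI[of _ 1])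
  ultimately show "((\<lambda>y. (exp_cutoff p y - exp_cutoff p 0) / (y - 0)) \<longlongrightarrow> 0) (at_right 0)"
    by (rule Lim_transform_eventually)
qed

lemma exp_cutoff_deriv_pos:
  assumes t: "t > 0"
  shows "(exp_cutoff p has_real_derivative exp_cutoff (exp_cutoff_deriv p) t) (at t)"
proof -
  have "((\<lambda>t. poly p (1/t) * exp (- (1/t))) has_real_derivative
        (poly (pderiv p) (1/t) * (- inverse (t^2)) * exp (- (1/t))
         + poly p (1/t) * (exp (- (1/t)) * inverse (t^2)))) (at t)"
    using t by (auto intro!: derivative_eq_intros DERIV_chain2[OF poly_DERIV]
        simp: power2_eq_square field_simps)
  also have "poly (pderiv p) (1/t) * (- inverse (t^2)) * exp (- (1/t))
       + poly p (1/t) * (exp (- (1/t)) * inverse (t^2)) = exp_cutoff (exp_cutoff_deriv p) t"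
    using t by (simp add: exp_cutoff_def exp_cutoff_deriv_def poly_monom field_simps power2_eq_square)
  finally show ?thesis
    by (rule has_field_derivative_transform_within_open[of _ _ _ "{0<..}"])
      (use t in \<open>auto simp: exp_cutoff_def\<close>)
qed

lemma exp_cutoff_deriv_neg:
  assumes t: "t < 0"
  shows "(exp_cutoff p has_real_derivative 0) (at t)"
  by (rule has_field_derivative_transform_within_open[of "\<lambda>t. 0" _ _ "{..<0}"])
    (use t in \<open>auto simp: exp_cutoff_def\<close>)

lemma exp_cutoff_has_deriv: "(exp_cutoff p has_real_derivative exp_cutoff (exp_cutoff_deriv p) t) (at t)"
proof -
  consider "t > 0" | "t = 0" | "t < 0" by linarith
  then show ?thesis
  proof cases
    case 1 then show ?thesis by (rule exp_cutoff_deriv_pos)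
  next
    case 2 then show ?thesis using exp_cutoff_deriv0[of p] by (simp add: exp_cutoff_def)
  next
    case 3 then show ?thesis using exp_cutoff_deriv_neg[of t p] by (simp add: exp_cutoff_def)
  qed
qed

lemma exp_cutoff_cont: "continuous_on UNIV (exp_cutoff p)"
  using exp_cutoff_has_deriv by (meson DERIV_isCont continuous_at_imp_continuous_on)

lemma Ck_real_exp_cutoff: "Ck_real k (exp_cutoff p)"
proof (induction k arbitrary: p)
  case 0 then show ?case using exp_cutoff_cont by simp
next
  case (Suc k) then show ?case
    using exp_cutoff_cont exp_cutoff_has_deriv by (auto intro!: exI[of _ "exp_cutoff (exp_cutoff_deriv p)"])
qed

definition cutoff :: "real \<Rightarrow> real" where "cutoff = exp_cutoff 1"

lemma cutoff_eq: "cutoff t = (if t > 0 then exp (- (1/t)) else 0)"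
  by (simp add: cutoff_def exp_cutoff_def)

lemma cutoff_nonneg: "0 \<le> cutoff t" and cutoff_le1: "cutoff t \<le> 1"
  by (auto simp: cutoff_eq)

lemma cutoff_pos: "cutoff s \<noteq> 0 \<Longrightarrow> s > 0"
  by (auto simp: cutoff_eq split: if_splits)

lemma cutoff_lim: "s > 0 \<Longrightarrow> (\<lambda>n. cutoff (real (Suc n) * s)) \<longlonglongrightarrow> 1"
proof -
  assume s: "s > 0"
  have "(\<lambda>n. exp (- (inverse s * inverse (real (Suc n))))) \<longlonglongrightarrow> exp (- (inverse s * 0))"
    by (intro tendsto_intros LIMSEQ_inverse_real_of_nat)
  moreover have "cutoff (real (Suc n) * s) = exp (- (inverse s * inverse (real (Suc n))))" for n
    using s by (simp add: cutoff_eq field_simps add_pos_nonneg)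
  ultimately show ?thesis by simp
qed

lemma Ck_on_mono: "Ck_on (Suc k) UNIV f \<Longrightarrow> Ck_on k UNIV f"
proof (induction k arbitrary: f)
  case (Suc k)
  then obtain G where "\<forall>x. (f has_derivative (\<lambda>h. G x \<bullet> h)) (at x)"
    "\<forall>j. Ck_on (Suc k) UNIV (\<lambda>x. G x $ j)" "continuous_on UNIV f" by auto
  with Suc.IH show ?case by auto
qed simp

lemma Ck_on_const: "Ck_on k UNIV (\<lambda>x. c)"
proof (induction k arbitrary: c)
  case (Suc k)
  have "((\<bullet>) (0::'a pt)) = (\<lambda>h. 0)" by (rule ext) simp
  then have "((\<lambda>x::'a pt. c) has_derivative (\<lambda>h. (0::'a pt) \<bullet> h)) (at x)" for x
    by simp
  then have "\<exists>G. (\<forall>x\<in>UNIV. ((\<lambda>x::'a pt. c) has_derivative (\<lambda>h. G x \<bullet> h)) (at x)) \<and>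
      (\<forall>j. Ck_on k UNIV (\<lambda>x. G x $ j))"
    using Suc by (intro exI[of _ "\<lambda>x. 0"]) simp
  then show ?case by simp
qed simp

lemma Ck_on_add: "Ck_on k UNIV f \<Longrightarrow> Ck_on k UNIV g \<Longrightarrow> Ck_on k UNIV (\<lambda>x. f x + g x)"
proof (induction k arbitrary: f g)
  case 0 then show ?case by (auto intro!: continuous_intros)
next
  case (Suc k)
  from Suc.prems obtain F G where
    F: "\<forall>x. (f has_derivative (\<lambda>h. F x \<bullet> h)) (at x)" "\<forall>j. Ck_on k UNIV (\<lambda>x. F x $ j)"
    and G: "\<forall>x. (g has_derivative (\<lambda>h. G x \<bullet> h)) (at x)" "\<forall>j. Ck_on k UNIV (\<lambda>x. G x $ j)"
    and c: "continuous_on UNIV f" "continuous_on UNIV g" by auto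
  have "\<forall>x. ((\<lambda>x. f x + g x) has_derivative (\<lambda>h. (F x + G x) \<bullet> h)) (at x)"
    using F G by (auto intro!: derivative_eq_intros simp: inner_add_left)
  moreover have "\<forall>j. Ck_on k UNIV (\<lambda>x. (F x + G x) $ j)"
    using Suc.IH F G by auto
  ultimately show ?case using c by (auto intro!: continuous_intros)
qed

lemma Ck_on_mult: "Ck_on k UNIV f \<Longrightarrow> Ck_on k UNIV g \<Longrightarrow> Ck_on k UNIV (\<lambda>x. f x * g x)"
proof (induction k arbitrary: f g)
  case 0 then show ?case by (auto intro!: continuous_intros)
next
  case (Suc k)
  from Suc.prems obtain F G where
    F: "\<forall>x. (f has_derivative (\<lambda>h. F x \<bullet> h)) (at x)" "\<forall>j. Ck_on k UNIV (\<lambda>x. F x $ j)"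
    and G: "\<forall>x. (g has_derivative (\<lambda>h. G x \<bullet> h)) (at x)" "\<forall>j. Ck_on k UNIV (\<lambda>x. G x $ j)"
    and c: "continuous_on UNIV f" "continuous_on UNIV g" by auto
  have "\<forall>x. ((\<lambda>x. f x * g x) has_derivative (\<lambda>h. (f x *\<^sub>R G x + g x *\<^sub>R F x) \<bullet> h)) (at x)"
    using F G by (auto intro!: derivative_eq_intros simp: inner_add_left algebra_simps)
  moreover have "Ck_on k UNIV (\<lambda>x. (f x *\<^sub>R G x + g x *\<^sub>R F x) $ j)" for j
  proof -
    have "Ck_on k UNIV (\<lambda>x. f x * G x $ j + g x * F x $ j)"
      using Suc.IH[OF Ck_on_mono[OF Suc.prems(1)]] Suc.IH[OF Ck_on_mono[OF Suc.prems(2)]] F G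
      by (intro Ck_on_add) auto
    then show ?thesis by simp
  qed
  ultimately show ?case using c by (auto intro!: continuous_intros)
qed

lemma Ck_on_prod:
  "finite A \<Longrightarrow> (\<And>i. i \<in> A \<Longrightarrow> Ck_on k UNIV (f i)) \<Longrightarrow> Ck_on k UNIV (\<lambda>x. \<Prod>i\<in>A. f i x)"
  by (induction A rule: finite_induct) (simp_all add: Ck_on_const Ck_on_mult)

lemma Ck_on_coord: "Ck_real k h \<Longrightarrow> Ck_on k UNIV (\<lambda>x::'n::finite pt. h (x $ i))"
proof (induction k arbitrary: h)
  case 0 then show ?case
    by (auto intro!: continuous_on_compose2[of UNIV h] continuous_intros)
next
  case (Suc k)
  from Suc.prems obtain h' where h': "\<forall>t. (h has_real_derivative h' t) (at t)" "Ck_real k h'"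
     and c: "continuous_on UNIV h" by auto
  have "((\<lambda>x::'n pt. h (x $ i)) has_derivative (\<lambda>v. (h' (x $ i) *\<^sub>R axis i 1) \<bullet> v)) (at x)" for x
  proof -
    have "((\<lambda>x::'n pt. h (x $ i)) has_derivative (\<lambda>v. h' (x $ i) * (v $ i))) (at x)"
      using h' has_derivative_compose[OF bounded_linear_imp_has_derivative[OF bounded_linear_vec_nth[of i]],
          of h "\<lambda>v. h' (x $ i) * v" x UNIV]
      by (metis has_field_derivative_def mult.commute)
    then show ?thesis by (simp add: inner_axis' mult.commute)
  qed
  moreover have "Ck_on k UNIV (\<lambda>x::'n pt. (h' (x $ i) *\<^sub>R axis i 1) $ j)" for j
  proof -
    have "Ck_on k UNIV (\<lambda>x::'n pt. h' (x $ i) * (axis i 1 :: 'n pt) $ j)"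
      by (intro Ck_on_mult Suc.IH h' Ck_on_const)
    then show ?thesis by simp
  qed
  moreover have "continuous_on UNIV (\<lambda>x::'n pt. h (x $ i))"
    using c by (auto intro!: continuous_on_compose2[of UNIV h] continuous_intros)
  moreover have "((\<bullet>) (c *\<^sub>R axis i 1)) = (\<lambda>v::'n pt. c * (axis i 1 \<bullet> v))" for c
    by (rule ext) simp
  ultimately show ?case by (auto intro!: exI[of _ "\<lambda>x. h' (x $ i) *\<^sub>R axis i 1"])
qed

definition bump :: "real \<Rightarrow> ('n::finite) pt \<Rightarrow> 'n pt \<Rightarrow> 'n pt \<Rightarrow> real" where
  "bump m a b x = (\<Prod>i\<in>UNIV. cutoff (m * (x $ i) + (- m * a $ i)) * cutoff ((- m) * (x $ i) + m * b $ i))"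

lemma bump_smooth: "smooth_on UNIV (bump m a b)"
  unfolding smooth_on_def bump_def[abs_def] cutoff_def
  by (intro allI Ck_on_prod Ck_on_mult Ck_on_coord[where h="\<lambda>t. exp_cutoff 1 (_ * t + _)"]
      Ck_real_affine Ck_real_exp_cutoff) auto

lemma bump_nz: "m > 0 \<Longrightarrow> bump m a b x \<noteq> 0 \<Longrightarrow> x \<in> box a b"
proof -
  assume m: "m > 0" and nz: "bump m a b x \<noteq> 0"
  have "\<forall>i. cutoff (m * (x $ i) + (- m * a $ i)) \<noteq> 0 \<and> cutoff ((- m) * (x $ i) + m * b $ i) \<noteq> 0"
    using nz unfolding bump_def by auto
  then have "\<forall>i. m * (x $ i) + (- m * a $ i) > 0 \<and> (- m) * (x $ i) + m * b $ i > 0"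
    using cutoff_pos by blast
  then have "\<forall>i. m * (x $ i - a $ i) > 0 \<and> m * (b $ i - x $ i) > 0"
    by (simp add: algebra_simps)
  then show ?thesis using m by (auto simp: mem_box_cart zero_less_mult_iff)
qed

lemma bump_test: "m > 0 \<Longrightarrow> test_fun UNIV (bump m a b)"
proof -
  assume "m > 0"
  then have "closure {x. bump m a b x \<noteq> 0} \<subseteq> cbox a b"
    by (intro closure_minimal) (use bump_nz box_subset_cbox in blast)+
  then show ?thesis unfolding test_fun_def using bump_smooth
    by (metis closed_closure compact_Int_closed compact_cbox inf.absorb_iff2 subset_UNIV)
qed

lemma bump_abs_le1: "\<bar>bump m a b x\<bar> \<le> 1"
proof -
  have "0 \<le> bump m a b x"
    unfolding bump_def by (intro prod_nonneg mult_nonneg_nonneg cutoff_nonneg)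
  moreover have "bump m a b x \<le> 1"
    unfolding bump_def by (intro prod_le_1 conjI mult_nonneg_nonneg cutoff_nonneg mult_le_one cutoff_le1)
  ultimately show ?thesis by simp
qed

lemma bump_meas: "bump m a (b::('n::finite) pt) \<in> borel_measurable lebesgue"
proof -
  have "continuous_on UNIV (bump m a b)"
    using bump_smooth unfolding smooth_on_def by (metis Ck_on.simps(1))
  moreover have "(\<lambda>x. x) \<in> borel_measurable (lebesgue :: 'n pt measure)"
    by (intro measurable_completion measurable_ident_sets) simp
  ultimately show ?thesis using borel_measurable_continuous_on by blast
qed

lemma bump_lim: "(\<lambda>n. bump (real (Suc n)) a b x) \<longlonglongrightarrow> indicator (box a b) x"
proof (cases "x \<in> box a b")
  case True
  then have xi: "\<And>i. a $ i < x $ i \<and> x $ i < b $ i" by (auto simp: mem_box_cart)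
  have "(\<lambda>n. \<Prod>i\<in>UNIV. cutoff (real (Suc n) * (x $ i - a $ i)) * cutoff (real (Suc n) * (b $ i - x $ i)))
        \<longlonglongrightarrow> (\<Prod>i\<in>(UNIV::'a set). 1 * 1)"
    using xi by (intro tendsto_prod tendsto_mult cutoff_lim) auto
  moreover have "bump (real (Suc n)) a b x
      = (\<Prod>i\<in>UNIV. cutoff (real (Suc n) * (x $ i - a $ i)) * cutoff (real (Suc n) * (b $ i - x $ i)))" for n
    unfolding bump_def by (simp add: algebra_simps)
  ultimately show ?thesis using True by simp
next
  case False
  then have "bump (real (Suc n)) a b x = 0" for n using bump_nz[of "real (Suc n)" a b x] by auto
  then show ?thesis using False by simp
qed

lemma bump_shift: "bump m a b (x + e) = bump m (a - e) (b - e) x"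
  unfolding bump_def by (simp add: algebra_simps)

lemma grad_shift:
  assumes "(\<phi> has_derivative D) (at (x + e))"
  shows "grad (\<lambda>x. \<phi> (x + e)) x = grad \<phi> (x + e)"
proof -
  have "((\<lambda>x. x + e) has_derivative (\<lambda>h. h)) (at x)" by (auto intro!: derivative_eq_intros)
  then have "((\<lambda>x. \<phi> (x + e)) has_derivative D) (at x)"
    using has_derivative_compose[of "\<lambda>x. x + e" "\<lambda>h. h" x UNIV \<phi> D] assms by simp
  then show ?thesis using assms unfolding grad_def by (metis frechet_derivative_at)
qed

lemma bump_differentiable: "\<exists>D. (bump m a b has_derivative D) (at x)"
proof -
  have "Ck_on 1 UNIV (bump m a b)" using bump_smooth unfolding smooth_on_def by blast
  then show ?thesis by auto
qed

section \<open>The fundamental lemma of the calculus of variations\<close>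

lemma density_parts_eq_on_boxes:
  fixes h :: "'a::euclidean_space \<Rightarrow> real"
  assumes hm[measurable]: "h \<in> borel_measurable lborel" and hi: "integrable lborel h"
    and z: "(\<integral>x. indicator (box a b) x * h x \<partial>lborel) = 0"
  shows "emeasure (density lborel (\<lambda>x. ennreal (h x))) (box a b)
       = emeasure (density lborel (\<lambda>x. ennreal (- h x))) (box a b)"
proof -
  define X where "X = box a b"
  have fin: "(\<integral>\<^sup>+x. ennreal (norm (h x)) \<partial>lborel) < \<infinity>" using hi by (simp add: integrable_iff_bounded)
  have ii: "integrable lborel (\<lambda>x. indicator X x * h x)"
    using integrable_real_mult_indicator[of X lborel h] hi by (simp add: X_def mult.commute)
  have e: "enn2real (\<integral>\<^sup>+x. ennreal (indicator X x * h x) \<partial>lborel)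
      = enn2real (\<integral>\<^sup>+x. ennreal (- (indicator X x * h x)) \<partial>lborel)"
    using real_lebesgue_integral_def[OF ii] z by (simp add: X_def)
  have f1: "(\<integral>\<^sup>+x. ennreal (indicator X x * h x) \<partial>lborel) < \<infinity>"
    by (rule le_less_trans[OF nn_integral_mono fin]) (auto simp: indicator_def)
  have f2: "(\<integral>\<^sup>+x. ennreal (- (indicator X x * h x)) \<partial>lborel) < \<infinity>"
    by (rule le_less_trans[OF nn_integral_mono fin]) (auto simp: indicator_def)
  have "(\<integral>\<^sup>+x. ennreal (indicator X x * h x) \<partial>lborel)
      = (\<integral>\<^sup>+x. ennreal (- (indicator X x * h x)) \<partial>lborel)"
  proof -
    have "ennreal (enn2real (\<integral>\<^sup>+x. ennreal (indicator X x * h x) \<partial>lborel))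
        = ennreal (enn2real (\<integral>\<^sup>+x. ennreal (- (indicator X x * h x)) \<partial>lborel))"
      using e by simp
    then show ?thesis using f1 f2 by (subst (asm) (1 2) ennreal_enn2real) auto
  qed
  moreover have "emeasure (density lborel (\<lambda>x. ennreal (h x))) X
      = (\<integral>\<^sup>+x. ennreal (indicator X x * h x) \<partial>lborel)"
    by (simp add: X_def emeasure_density) (intro nn_integral_cong, auto simp: indicator_def)
  moreover have "emeasure (density lborel (\<lambda>x. ennreal (- h x))) X
      = (\<integral>\<^sup>+x. ennreal (- (indicator X x * h x)) \<partial>lborel)"
    by (simp add: X_def emeasure_density) (intro nn_integral_cong, auto simp: indicator_def)
  ultimately show ?thesis by (simp add: X_def)
qed

text \<open>Hence the two densities coincide (boxes generate the Borel sets), and \<open>h = 0\<close> a.e.\<close>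
lemma integral_boxes_zero_AE_lborel:
  fixes h :: "'a::euclidean_space \<Rightarrow> real"
  assumes hm[measurable]: "h \<in> borel_measurable lborel" and hi: "integrable lborel h"
    and z: "\<And>a b. (\<integral>x. indicator (box a b) x * h x \<partial>lborel) = 0"
  shows "AE x in lborel. h x = 0"
proof -
  let ?P = "\<lambda>x. ennreal (h x)" and ?N = "\<lambda>x. ennreal (- h x)"
  have fin: "(\<integral>\<^sup>+x. ennreal (norm (h x)) \<partial>lborel) < \<infinity>" using hi by (simp add: integrable_iff_bounded)
  have "density lborel ?P = density lborel ?N"
  proof (rule measure_eqI_generator_eq)
    let ?E = "range (\<lambda>(a, b). box a b::'a set)"
    show "Int_stable ?E"
      by (auto simp: Int_stable_def box_Int_box)
    show "?E \<subseteq> Pow UNIV" "sets (density lborel ?P) = sigma_sets UNIV ?E"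
      "sets (density lborel ?N) = sigma_sets UNIV ?E"
      by (simp_all add: borel_eq_box)
    let ?A = "\<lambda>n::nat. box (- (real n *\<^sub>R One)) (real n *\<^sub>R One) :: 'a set"
    show "range ?A \<subseteq> ?E" "(\<Union>i. ?A i) = UNIV"
      unfolding UN_box_eq_UNIV by auto
    show "emeasure (density lborel ?P) (?A i) \<noteq> \<infinity>" for i
    proof -
      have "emeasure (density lborel ?P) (?A i) \<le> (\<integral>\<^sup>+x. ennreal (norm (h x)) \<partial>lborel)"
        by (simp add: emeasure_density) (intro nn_integral_mono, auto simp: indicator_def)
      then show ?thesis using fin by (simp add: top.not_eq_extremum order_le_less_trans)
    qed
    show "emeasure (density lborel ?P) X = emeasure (density lborel ?N) X" if "X \<in> ?E" for X
      using that density_parts_eq_on_boxes[OF hm hi z] by auto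
  qed
  then have "AE x in lborel. ?P x = ?N x"
  proof (subst finite_density_unique[symmetric])
    have "integral\<^sup>N lborel ?P \<le> (\<integral>\<^sup>+x. ennreal (norm (h x)) \<partial>lborel)"
      by (intro nn_integral_mono) (auto intro!: ennreal_leI)
    then show "integral\<^sup>N lborel ?P \<noteq> \<infinity>" using fin by (simp add: top.not_eq_extremum order_le_less_trans)
  qed auto
  then show ?thesis
  proof eventually_elim
    case (elim x)
    then show ?case by (cases "h x \<ge> 0") (simp_all add: ennreal_neg)
  qed
qed
lemma integral_boxes_zero_AE:
  fixes h :: "'a::euclidean_space \<Rightarrow> real"
  assumes hi: "integrable lebesgue h"
    and z: "\<And>a b. (\<integral>x. indicator (box a b) x * h x \<partial>lebesgue) = 0"
  shows "AE x in lebesgue. h x = 0"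
proof -
  have hm: "h \<in> borel_measurable lebesgue" using hi by auto
  obtain h' where h'm: "h' \<in> borel_measurable lborel" and ae: "AE x in lborel. h x = h' x"
    using completion_ex_borel_measurable_real[OF hm] by auto
  have aec: "AE x in lebesgue. h x = h' x" using ae by (rule AE_completion)
  have "integrable lebesgue h'" by (rule integrable_cong_AE_imp[OF hi measurable_completion[OF h'm] aec])
  then have hi': "integrable lborel h'" using integrable_completion h'm by blast
  have "(\<integral>x. indicator (box a b) x * h' x \<partial>lborel) = 0" for a b
  proof -
    have "(\<integral>x. indicator (box a b) x * h' x \<partial>lborel) = (\<integral>x. indicator (box a b) x * h' x \<partial>lebesgue)"
      by (rule integral_completion[symmetric]) (use h'm in measurable)
    also have "\<dots> = (\<integral>x. indicator (box a b) x * h x \<partial>lebesgue)"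
    proof (rule integral_cong_AE)
      have bx: "box a b \<in> sets lebesgue" by simp
      show "(\<lambda>x. indicator (box a b) x * h' x) \<in> borel_measurable lebesgue"
        by (intro borel_measurable_times borel_measurable_indicator bx measurable_completion[OF h'm])
      show "(\<lambda>x. indicator (box a b) x * h x) \<in> borel_measurable lebesgue"
        by (intro borel_measurable_times borel_measurable_indicator bx hm)
      show "AE x in lebesgue. indicator (box a b) x * h' x = indicator (box a b) x * h x"
        using aec by auto
    qed
    finally show ?thesis using z by simp
  qed
  from integral_boxes_zero_AE_lborel[OF h'm hi' this] have "AE x in lborel. h' x = 0" .
  then have "AE x in lebesgue. h' x = 0" by (rule AE_completion)
  with aec show ?thesis by eventually_elim simp
qed


lemma integrable_mult_bump:
  fixes f :: "('n::finite) pt \<Rightarrow> real"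
  assumes m: "m > 0" and fi: "integrable lebesgue (\<lambda>x. indicator (cbox a b) x * f x)"
  shows "integrable lebesgue (\<lambda>x. f x * bump m a b x)"
proof -
  have eq: "f x * bump m a b x = (indicator (cbox a b) x * f x) * bump m a b x" for x
    using bump_nz[OF m, of a b x] box_subset_cbox[of a b] by (auto simp: indicator_def)
  have "integrable lebesgue (\<lambda>x. (indicator (cbox a b) x * f x) * bump m a b x)"
  proof (rule Bochner_Integration.integrable_bound[OF fi])
    show "(\<lambda>x. indicator (cbox a b) x * f x * bump m a b x) \<in> borel_measurable lebesgue"
      by (rule borel_measurable_times[OF borel_measurable_integrable[OF fi] bump_meas])
    show "AE x in lebesgue. norm (indicator (cbox a b) x * f x * bump m a b x)
        \<le> norm (indicator (cbox a b) x * f x)"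
      using bump_abs_le1[of m a b] by (intro AE_I2) (simp add: abs_mult mult_left_le)
  qed
  then show ?thesis by (simp add: eq)
qed

text \<open>If \<open>g\<close> integrates to zero against all bumps, it integrates to zero over all boxes:
  dominated convergence along bumps tending to the indicator of the box.\<close>
lemma bump_integrals_zero_box:
  fixes g :: "('n::finite) pt \<Rightarrow> real"
  assumes gi: "\<And>a b. integrable lebesgue (\<lambda>x. indicator (cbox a b) x * g x)"
    and z: "\<And>m a b. m > 0 \<Longrightarrow> (\<integral>x. g x * bump m a b x \<partial>lebesgue) = 0"
  shows "(\<integral>x. indicator (box a b) x * g x \<partial>lebesgue) = 0"
proof -
  let ?G = "\<lambda>x. indicator (cbox a b) x * g x"
  have Gm: "?G \<in> borel_measurable lebesgue" using gi by auto
  have box_G: "indicator (box a b) x * ?G x = indicator (box a b) x * g x" for x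
    using box_subset_cbox[of a b] by (auto simp: indicator_def)
  have "(\<lambda>n. \<integral>x. ?G x * bump (real (Suc n)) a b x \<partial>lebesgue)
      \<longlonglongrightarrow> (\<integral>x. indicator (box a b) x * g x \<partial>lebesgue)"
  proof (rule integral_dominated_convergence[where w="\<lambda>x. norm (?G x)"])
    have "(\<lambda>x. indicator (box a b) x * ?G x) \<in> borel_measurable lebesgue"
      by (intro borel_measurable_times borel_measurable_indicator Gm) simp
    then show "(\<lambda>x. indicator (box a b) x * g x) \<in> borel_measurable lebesgue"
      by (simp add: box_G)
    show "(\<lambda>x. ?G x * bump (real (Suc n)) a b x) \<in> borel_measurable lebesgue" for n
      by (intro borel_measurable_times Gm bump_meas)
    show "integrable lebesgue (\<lambda>x. norm (?G x))" using gi by simp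
    have "(\<lambda>n. ?G x * bump (real (Suc n)) a b x) \<longlonglongrightarrow> indicator (box a b) x * g x" for x
    proof -
      have "(\<lambda>n. ?G x * bump (real (Suc n)) a b x) \<longlonglongrightarrow> ?G x * indicator (box a b) x"
        by (intro tendsto_intros bump_lim)
      moreover have "?G x * indicator (box a b) x = indicator (box a b) x * g x"
        by (metis box_G mult.commute)
      ultimately show ?thesis by simp
    qed
    then show "AE x in lebesgue. (\<lambda>n. ?G x * bump (real (Suc n)) a b x)
        \<longlonglongrightarrow> indicator (box a b) x * g x" by simp
    show "AE x in lebesgue. norm (?G x * bump (real (Suc n)) a b x) \<le> norm (?G x)" for n
      using bump_abs_le1[of "real (Suc n)" a b] by (intro AE_I2) (simp add: abs_mult mult_left_le)
  qed
  moreover have "(\<integral>x. ?G x * bump (real (Suc n)) a b x \<partial>lebesgue) = 0" for n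
  proof -
    have "?G x * bump (real (Suc n)) a b x = g x * bump (real (Suc n)) a b x" for x
      using bump_nz[of "real (Suc n)" a b x] box_subset_cbox[of a b] by (auto simp: indicator_def)
    then have "(\<integral>x. ?G x * bump (real (Suc n)) a b x \<partial>lebesgue)
        = (\<integral>x. g x * bump (real (Suc n)) a b x \<partial>lebesgue)"
      by (intro Bochner_Integration.integral_cong refl)
    then show ?thesis using z[of "real (Suc n)" a b] by simp
  qed
  ultimately show ?thesis by (simp add: LIMSEQ_const_iff)
qed

lemma fundamental_lemma:
  fixes g :: "('n::finite) pt \<Rightarrow> real"
  assumes gi: "\<And>a b. integrable lebesgue (\<lambda>x. indicator (cbox a b) x * g x)"
    and z: "\<And>m a b. m > 0 \<Longrightarrow> (\<integral>x. g x * bump m a b x \<partial>lebesgue) = 0"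
  shows "AE x in lebesgue. g x = 0"
proof -
  have bz: "\<And>a b. (\<integral>x. indicator (box a b) x * g x \<partial>lebesgue) = 0"
    by (rule bump_integrals_zero_box[OF gi z])
  have "AE x in lebesgue. indicator (box c d) x * g x = 0" for c d :: "'n pt"
  proof (rule integral_boxes_zero_AE)
    have "integrable lebesgue (\<lambda>x. indicator (box c d) x * (indicator (cbox c d) x * g x))"
      using integrable_real_mult_indicator[of "box c d" lebesgue, OF _ gi[of c d]] by (simp add: mult.commute)
    moreover have "indicator (box c d) x * (indicator (cbox c d) x * g x) = indicator (box c d) x * g x" for x
      using box_subset_cbox[of c d] by (auto simp: indicator_def)
    ultimately show "integrable lebesgue (\<lambda>x. indicator (box c d) x * g x)" by simp
    fix a b :: "'n pt"
    obtain a' b' where ab: "box a b \<inter> box c d = box a' b'" using box_Int_box by blast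
    have "indicator (box a b) x * (indicator (box c d) x * g x) = indicator (box a' b') x * g x" for x
      unfolding ab[symmetric] by (auto simp: indicator_def)
    then have "(\<integral>x. indicator (box a b) x * (indicator (box c d) x * g x) \<partial>lebesgue)
        = (\<integral>x. indicator (box a' b') x * g x \<partial>lebesgue)"
      by (intro Bochner_Integration.integral_cong refl)
    then show "(\<integral>x. indicator (box a b) x * (indicator (box c d) x * g x) \<partial>lebesgue) = 0"
      using bz by simp
  qed
  then have "AE x in lebesgue. \<forall>n::nat. indicator (box (- (real n *\<^sub>R One)) (real n *\<^sub>R One)) x * g x = 0"
    by (subst AE_all_countable) blast
  then show ?thesis
  proof eventually_elim
    case (elim x)
    obtain n where "x \<in> box (- (real n *\<^sub>R One)) (real n *\<^sub>R One)"
      using UN_box_eq_UNIV[where 'a="'n pt"] by blast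
    with elim[rule_format, of n] show ?case by simp
  qed
qed

section \<open>Translations and periodicity of weak gradients\<close>

lemma lebesgue_affine_scalar:
  fixes t :: "'a::euclidean_space" and c :: real
  assumes c: "c \<noteq> 0"
  shows "lebesgue = density (distr lebesgue lebesgue (\<lambda>x. t + c *\<^sub>R x)) (\<lambda>_. ennreal (\<bar>c\<bar> ^ DIM('a)))"
    and "(\<lambda>x. t + c *\<^sub>R x) \<in> lebesgue \<rightarrow>\<^sub>M lebesgue"
  using lebesgue_affine_euclidean[where c="\<lambda>_::'a. c" and t=t]
    lebesgue_affine_measurable[where c="\<lambda>_::'a. c" and t=t] c
  unfolding scaleR_scaleR[symmetric] scaleR_sum_right[symmetric] euclidean_representation prod_constant
  by auto

lemma lebesgue_transl:
  fixes t :: "'a::euclidean_space"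
  shows "lebesgue = distr lebesgue lebesgue (\<lambda>x. t + x)"
    and "(\<lambda>x. t + x) \<in> lebesgue \<rightarrow>\<^sub>M lebesgue"
  using lebesgue_affine_scalar[of 1 t] by (simp_all add: density_1)

lemma integral_transl:
  fixes f :: "'a::euclidean_space \<Rightarrow> 'b::{banach, second_countable_topology}"
  shows "(\<integral>x. f (t + x) \<partial>lebesgue) = (\<integral>x. f x \<partial>lebesgue)"
proof (cases "f \<in> borel_measurable lebesgue")
  case True
  have "(\<integral>x. f x \<partial>lebesgue) = (\<integral>x. f x \<partial>distr lebesgue lebesgue (\<lambda>x. t + x))"
    using lebesgue_transl(1)[of t] by simp
  also have "\<dots> = (\<integral>x. f (t + x) \<partial>lebesgue)"
    by (rule integral_distr[OF lebesgue_transl(2) True])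
  finally show ?thesis by simp
next
  case False
  have "(\<lambda>x. f (t + x)) \<notin> borel_measurable lebesgue"
  proof
    assume "(\<lambda>x. f (t + x)) \<in> borel_measurable lebesgue"
    from measurable_comp[OF lebesgue_transl(2)[of "-t"] this]
    have "(\<lambda>x. f x) \<in> borel_measurable lebesgue" by (simp add: comp_def)
    with False show False by simp
  qed
  then have "\<not> integrable lebesgue (\<lambda>x. f (t + x))" "\<not> integrable lebesgue f"
    using False by auto
  then show ?thesis by (simp add: not_integrable_integral_eq)
qed

lemma nn_integral_affine:
  fixes f :: "'a::euclidean_space \<Rightarrow> ennreal" and c :: real
  assumes f: "f \<in> borel_measurable lebesgue" and c: "c \<noteq> 0"
  shows "(\<integral>\<^sup>+x. f x \<partial>lebesgue) = ennreal (\<bar>c\<bar> ^ DIM('a)) * (\<integral>\<^sup>+x. f (t + c *\<^sub>R x) \<partial>lebesgue)"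
proof -
  have "(\<integral>\<^sup>+x. f x \<partial>lebesgue) = (\<integral>\<^sup>+x. f x \<partial>density (distr lebesgue lebesgue (\<lambda>x. t + c *\<^sub>R x)) (\<lambda>_. ennreal (\<bar>c\<bar> ^ DIM('a))))"
    using lebesgue_affine_scalar(1)[OF c, of t] by simp
  also have "\<dots> = (\<integral>\<^sup>+x. ennreal (\<bar>c\<bar> ^ DIM('a)) * f x \<partial>distr lebesgue lebesgue (\<lambda>x. t + c *\<^sub>R x))"
    by (subst nn_integral_density) (auto simp: f)
  also have "\<dots> = ennreal (\<bar>c\<bar> ^ DIM('a)) * (\<integral>\<^sup>+x. f x \<partial>distr lebesgue lebesgue (\<lambda>x. t + c *\<^sub>R x))"
    by (rule nn_integral_cmult) (simp add: f)
  also have "(\<integral>\<^sup>+x. f x \<partial>distr lebesgue lebesgue (\<lambda>x. t + c *\<^sub>R x)) = (\<integral>\<^sup>+x. f (t + c *\<^sub>R x) \<partial>lebesgue)"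
    by (rule nn_integral_distr[OF lebesgue_affine_scalar(2)[OF c] ]) (simp add: f)
  finally show ?thesis .
qed

lemma AE_transl:
  fixes t :: "'a::euclidean_space"
  assumes "AE x in lebesgue. P x"
  shows "AE x in lebesgue. P (t + x)"
proof -
  obtain N where N: "N \<in> null_sets lebesgue" "{x. \<not> P x} \<subseteq> N"
    using assms unfolding eventually_ae_filter by auto
  have "emeasure lebesgue ((\<lambda>x. t + x) -` N) = emeasure (distr lebesgue lebesgue (\<lambda>x. t + x)) N"
    using N by (subst emeasure_distr[OF lebesgue_transl(2)]) auto
  also have "\<dots> = 0" using N lebesgue_transl(1)[of t] by (metis null_setsD1)
  finally have "(\<lambda>x. t + x) -` N \<in> null_sets lebesgue"
    using N measurable_sets[OF lebesgue_transl(2) , of N t] by (auto simp: null_sets_def)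
  moreover have "{x. \<not> P (t + x)} \<subseteq> (\<lambda>x. t + x) -` N" using N by auto
  ultimately show ?thesis unfolding eventually_ae_filter by blast
qed

lemma integrable_transl:
  fixes f :: "'a::euclidean_space \<Rightarrow> 'b::{banach, second_countable_topology}"
  assumes "integrable lebesgue f"
  shows "integrable lebesgue (\<lambda>x. f (t + x))"
proof -
  have fm: "f \<in> borel_measurable lebesgue" using assms by auto
  have "integrable (distr lebesgue lebesgue (\<lambda>x. t + x)) f"
    using assms lebesgue_transl(1)[of t] by simp
  then show ?thesis using integrable_distr_eq[OF lebesgue_transl(2) fm] by simp
qed

text \<open>A locally integrable function on the whole space is measurable: it is the pointwise
  limit of its restrictions to the growing boxes \<open>[-n,n]\<^sup>n\<close>.\<close>
lemma loc_int_measurable: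
  fixes g :: "('n::finite) pt \<Rightarrow> 'b::{banach,second_countable_topology}"
  assumes "loc_int UNIV g"
  shows "g \<in> borel_measurable lebesgue"
proof (rule borel_measurable_LIMSEQ_metric)
  let ?B = "\<lambda>n::nat. cbox (- (real n *\<^sub>R One)) (real n *\<^sub>R One) :: 'n pt set"
  show "(\<lambda>x. indicator (?B n) x *\<^sub>R g x) \<in> borel_measurable lebesgue" for n
    using assms unfolding loc_int_def set_integrable_def by (auto intro: borel_measurable_integrable)
  show "(\<lambda>n. indicator (?B n) x *\<^sub>R g x) \<longlonglongrightarrow> g x" for x
  proof (rule tendsto_eventually)
    obtain N where "x \<in> box (- (real N *\<^sub>R One)) (real N *\<^sub>R One)"
      using UN_box_eq_UNIV[where 'a="'n pt"] by blast
    moreover have "real N \<le> real n" if "N \<le> n" for n using that by simp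
    ultimately have "x \<in> ?B n" if "N \<le> n" for n
      using that unfolding mem_box by (fastforce simp: inner_minus_left)
    then show "eventually (\<lambda>n. indicator (?B n) x *\<^sub>R g x = g x) sequentially"
      unfolding eventually_sequentially by (intro exI[of _ N]) simp
  qed
qed

lemma loc_int_component:
  fixes Dw :: "('n::finite) pt \<Rightarrow> 'n pt"
  assumes "loc_int UNIV Dw"
  shows "integrable lebesgue (\<lambda>x. indicator (cbox a b) x * Dw x $ j)"
proof -
  have "integrable lebesgue (\<lambda>x. indicator (cbox a b) x *\<^sub>R Dw x)"
    using assms unfolding loc_int_def set_integrable_def by auto
  from integrable_bounded_linear[OF bounded_linear_vec_nth[of j] this] show ?thesis by simp
qed

lemma weak_grad_periodic_bump:
  fixes w :: "('n::finite) pt \<Rightarrow> real" and Dw :: "'n pt \<Rightarrow> 'n pt" and e :: "'n pt"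
  assumes wg: "weak_grad UNIV w Dw" and per: "\<And>x. w (x + e) = w x" and m: "m > 0"
  shows "(\<integral>y. Dw (y - e) $ j * bump m a b y \<partial>lebesgue) = (\<integral>y. Dw y $ j * bump m a b y \<partial>lebesgue)"
proof -
  let ?\<phi> = "bump m a b" and ?\<phi>' = "bump m (a - e) (b - e)"
  have W: "test_fun UNIV \<phi> \<Longrightarrow>
      (\<integral>x. w x * grad \<phi> x $ j \<partial>lebesgue) = - (\<integral>x. Dw x $ j * \<phi> x \<partial>lebesgue)" for \<phi>
    using wg unfolding weak_grad_def set_lebesgue_integral_def by auto
  have gr: "grad ?\<phi>' x = grad ?\<phi> (x + e)" for x
  proof -
    have "?\<phi>' = (\<lambda>x. ?\<phi> (x + e))" by (simp add: bump_shift)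
    moreover obtain D where "(?\<phi> has_derivative D) (at (x + e))" using bump_differentiable by blast
    ultimately show ?thesis using grad_shift by metis
  qed
  have "(\<integral>y. Dw (y - e) $ j * ?\<phi> y \<partial>lebesgue) = (\<integral>x. Dw ((e + x) - e) $ j * ?\<phi> (e + x) \<partial>lebesgue)"
    by (rule integral_transl[symmetric])
  also have "\<dots> = (\<integral>x. Dw x $ j * ?\<phi>' x \<partial>lebesgue)"
    by (simp add: bump_shift[symmetric] add.commute)
  also have "\<dots> = - (\<integral>x. w x * grad ?\<phi>' x $ j \<partial>lebesgue)"
    using W[OF bump_test[OF m]] by simp
  also have "(\<integral>x. w x * grad ?\<phi>' x $ j \<partial>lebesgue) = (\<integral>x. w ((e + x) - e) * grad ?\<phi> (e + x) $ j \<partial>lebesgue)"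
    using per[of "x - e" for x] by (simp add: gr add.commute)
  also have "\<dots> = (\<integral>y. w (y - e) * grad ?\<phi> y $ j \<partial>lebesgue)"
    by (rule integral_transl)
  also have "\<dots> = (\<integral>y. w y * grad ?\<phi> y $ j \<partial>lebesgue)"
    using per[of "y - e" for y] by simp
  also have "\<dots> = - (\<integral>x. Dw x $ j * ?\<phi> x \<partial>lebesgue)" by (rule W[OF bump_test[OF m]])
  finally show ?thesis by simp
qed

lemma weak_grad_periodic:
  fixes w :: "('n::finite) pt \<Rightarrow> real" and Dw :: "'n pt \<Rightarrow> 'n pt" and e :: "'n pt"
  assumes wg: "weak_grad UNIV w Dw" and per: "\<And>x. w (x + e) = w x"
  shows "AE x in lebesgue. Dw (x + e) = Dw x"
proof -
  have li: "loc_int UNIV Dw" using wg unfolding weak_grad_def by auto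
  have I_shift: "integrable lebesgue (\<lambda>y. indicator (cbox a b) y * Dw (y - e) $ j)" for a b j
  proof -
    have "indicator (cbox (a - e) (b - e)) (- e + y) = (indicator (cbox a b) y :: real)" for y
      by (simp add: indicator_def mem_box_cart)
    then show ?thesis
      using integrable_transl[OF loc_int_component[OF li, of "a - e" "b - e" j], of "- e"] by simp
  qed
  have "AE y in lebesgue. Dw (y - e) $ j - Dw y $ j = 0" for j
  proof (rule fundamental_lemma)
    show "integrable lebesgue (\<lambda>y. indicator (cbox a b) y * (Dw (y - e) $ j - Dw y $ j))" for a b
      using I_shift[of a b j] loc_int_component[OF li, of a b j] by (simp add: algebra_simps)
  next
    fix m :: real and a b :: "'n pt" assume m: "m > 0"
    have "integrable lebesgue (\<lambda>y. Dw y $ j * bump m a b y)"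
      "integrable lebesgue (\<lambda>y. Dw (y - e) $ j * bump m a b y)"
      by (rule integrable_mult_bump[OF m loc_int_component[OF li]], rule integrable_mult_bump[OF m I_shift])
    then show "(\<integral>y. (Dw (y - e) $ j - Dw y $ j) * bump m a b y \<partial>lebesgue) = 0"
      using weak_grad_periodic_bump[OF wg per m, of j a b] by (simp add: left_diff_distrib)
  qed
  then have "AE y in lebesgue. \<forall>j. Dw (y - e) $ j = Dw y $ j"
    by (subst AE_all_countable) auto
  then have "AE y in lebesgue. Dw (y - e) = Dw y"
    by eventually_elim (simp add: vec_eq_iff)
  from AE_transl[OF this, of e] show ?thesis by (simp add: add.commute eq_commute)
qed

section \<open>Periodic microstructures and the unit cell\<close>

lemma periodic_shift_axis:
  assumes per: "Y_periodic f"
  shows "f (x + of_int m *\<^sub>R axis j 1) = f x"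
proof -
  have pos: "f (x + real n *\<^sub>R axis j 1) = f x" for n x
  proof (induction n arbitrary: x)
    case 0 then show ?case by simp
  next
    case (Suc n)
    have "f (x + real (Suc n) *\<^sub>R axis j 1) = f ((x + real n *\<^sub>R axis j 1) + axis j 1)"
      by (simp add: algebra_simps)
    also have "\<dots> = f (x + real n *\<^sub>R axis j 1)" using per unfolding Y_periodic_def by blast
    finally show ?case using Suc by simp
  qed
  show ?thesis
  proof (cases "m \<ge> 0")
    case True
    then obtain n where "m = int n" using nonneg_int_cases by blast
    then show ?thesis using pos by simp
  next
    case False
    define n where "n = nat (- m)"
    have n: "m = - int n" using False by (simp add: n_def)
    have "f x = f ((x + of_int m *\<^sub>R axis j 1) + real n *\<^sub>R axis j 1)"
      using n by (simp add: algebra_simps)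
    also have "\<dots> = f (x + of_int m *\<^sub>R axis j 1)" by (rule pos)
    finally show ?thesis by simp
  qed
qed

lemma intvec_sum: "intvec k = (\<Sum>j\<in>UNIV. of_int (k j) *\<^sub>R axis j (1::real))"
  by (simp add: intvec_def vec_eq_iff axis_def if_distrib cong: if_cong)

lemma periodic_shift_intvec:
  assumes per: "Y_periodic f"
  shows "f (x + intvec k) = f x"
proof -
  have "f (x + (\<Sum>j\<in>A. of_int (k j) *\<^sub>R axis j (1::real))) = f x" if "finite A" for A x
    using that
  proof (induction A arbitrary: x rule: finite_induct)
    case empty then show ?case by simp
  next
    case (insert a A)
    have "f (x + (\<Sum>j\<in>insert a A. of_int (k j) *\<^sub>R axis j 1)) =
          f ((x + (\<Sum>j\<in>A. of_int (k j) *\<^sub>R axis j 1)) + of_int (k a) *\<^sub>R axis a 1)"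
      using insert by (simp add: algebra_simps)
    also have "\<dots> = f (x + (\<Sum>j\<in>A. of_int (k j) *\<^sub>R axis j 1))" by (rule periodic_shift_axis[OF per])
    finally show ?case using insert by simp
  qed
  then show ?thesis by (simp add: intvec_sum)
qed

lemma intvec_add: "intvec k + intvec l = intvec (\<lambda>i. k i + l i)"
  by (simp add: intvec_def vec_eq_iff)

lemma intvec_minus: "- intvec k = intvec (\<lambda>i. - k i)"
  by (simp add: intvec_def vec_eq_iff)

lemma microstructure_periodic:
  assumes micro: "dispersed E \<or> layered E"
  shows "(y + intvec k \<in> E) \<longleftrightarrow> (y \<in> E)"
  using micro
proof
  assume "dispersed E"
  then obtain F where E: "E = (\<Union>k. (\<lambda>y. y + intvec k) ` F)" unfolding dispersed_def by blast
  have imp: "z + intvec l \<in> E" if "z \<in> E" for z l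
  proof -
    from that E obtain k f where "f \<in> F" "z = f + intvec k" by auto
    then have "z + intvec l = f + intvec (\<lambda>i. k i + l i)" by (simp add: intvec_add[symmetric] algebra_simps)
    with \<open>f \<in> F\<close> E show ?thesis by blast
  qed
  show ?thesis
  proof
    assume "y + intvec k \<in> E"
    from imp[OF this, of "\<lambda>i. - k i"] show "y \<in> E" by (simp add: intvec_minus[symmetric])
  qed (rule imp)
next
  assume "layered E"
  then obtain i0 a b where E: "E = {y. a < frac (y $ i0) \<and> frac (y $ i0) < b}" unfolding layered_def by blast
  have "frac (y $ i0 + of_int (k i0)) = frac (y $ i0)"
    by (simp add: frac_def)
  then show ?thesis using E by (simp add: intvec_def)
qed

lemma microstructure_borel:
  assumes micro: "dispersed E \<or> layered E"
  shows "E \<in> sets borel"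
  using micro
proof
  assume "dispersed E"
  then obtain F where F: "open F" and E: "E = (\<Union>k. (\<lambda>y. y + intvec k) ` F)" unfolding dispersed_def by blast
  have "open E" unfolding E
  proof (intro open_UN ballI)
    fix k
    have "open ((\<lambda>y. intvec k + y) ` F)" by (rule open_translation[OF F])
    then show "open ((\<lambda>y. y + intvec k) ` F)" by (simp add: add.commute)
  qed
  then show ?thesis by auto
next
  assume "layered E"
  then obtain i0 a b where E: "E = {y. a < frac (y $ i0) \<and> frac (y $ i0) < b}" unfolding layered_def by blast
  have c: "(\<lambda>y::'a pt. y $ i0) \<in> borel_measurable borel"
    by (intro borel_measurable_continuous_onI continuous_intros)
  have f: "(\<lambda>y::'a pt. real_of_int \<lfloor>y $ i0\<rfloor>) \<in> borel_measurable borel"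
    using measurable_comp[OF c borel_measurable_real_floor] by (simp add: comp_def)
  have m: "(\<lambda>y::'a pt. frac (y $ i0)) \<in> borel_measurable borel"
    unfolding frac_def by (rule borel_measurable_diff[OF c f])
  have "(\<lambda>y::'a pt. frac (y $ i0)) -` {a<..<b} \<inter> space borel \<in> sets borel"
    by (rule measurable_sets[OF m]) simp
  moreover have "(\<lambda>y::'a pt. frac (y $ i0)) -` {a<..<b} \<inter> space borel = E" using E by auto
  ultimately show ?thesis by simp
qed

lemma Ycell_box: "(Ycell :: ('n::finite) pt set) = box 0 (\<chi> i. 1)"
  by (auto simp: Ycell_def mem_box_cart)

lemma Ycell_sets[measurable]: "(Ycell :: ('n::finite) pt set) \<in> sets lebesgue"
  unfolding Ycell_box by simp

lemma Ycell_emeasure: "emeasure lebesgue (Ycell :: ('n::finite) pt set) = 1"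
proof -
  have "emeasure lebesgue (Ycell :: 'n pt set) = emeasure lborel (box (0::'n pt) (\<chi> i. 1))"
    unfolding Ycell_box by (simp add: emeasure_completion)
  also have "\<dots> = 1"
    by (subst emeasure_lborel_box_eq) (auto simp: Basis_vec_def inner_axis intro!: prod.neutral)
  finally show ?thesis .
qed

lemma Ycell_measure: "measure lebesgue (Ycell :: ('n::finite) pt set) = 1"
  unfolding measure_def by (subst Ycell_emeasure) simp

lemma pexp_meas[measurable]: "E \<in> sets lebesgue \<Longrightarrow> pexp E p1 p2 \<in> borel_measurable lebesgue"
  unfolding pexp_def[abs_def] by (rule measurable_If_set) auto

lemma sig_meas[measurable]: "E \<in> sets lebesgue \<Longrightarrow> sig E s1 s2 \<in> borel_measurable lebesgue"
  unfolding sig_def[abs_def] by (rule measurable_If_set) auto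

section \<open>The cell energy estimate\<close>

lemma young_half:
  fixes a b q :: real
  assumes a: "0 \<le> a" and b: "0 \<le> b" and q: "1 < q"
  shows "a powr (q - 1) * b \<le> a powr q / 2 + 2 powr (q - 1) * b powr q"
proof (cases "2 * b \<le> a")
  case True
  have "a powr (q - 1) * b \<le> a powr (q - 1) * (a / 2)"
    using True a by (intro mult_left_mono) auto
  also have "\<dots> = a powr q / 2"
  proof (cases "a = 0")
    case False
    then have "a powr (q - 1) * a = a powr q" using a powr_mult_base[of a "q - 1"] by (simp add: mult.commute)
    then show ?thesis by simp
  qed (use q in simp)
  finally show ?thesis using b by (smt (verit) mult_nonneg_nonneg powr_ge_zero)
next
  case False
  have "a powr (q - 1) \<le> (2 * b) powr (q - 1)" using False a q by (intro powr_mono2) auto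
  then have "a powr (q - 1) * b \<le> (2 * b) powr (q - 1) * b" using b by (rule mult_right_mono)
  also have "\<dots> = 2 powr (q - 1) * b powr q"
  proof (cases "b = 0")
    case False
    have "(2 * b) powr (q - 1) * b = 2 powr (q - 1) * (b powr (q - 1) * b)"
      using b by (simp add: powr_mult)
    also have "b powr (q - 1) * b = b powr q" using b powr_mult_base[of b "q - 1"] by (simp add: mult.commute)
    finally show ?thesis .
  qed (use q in simp)
  finally show ?thesis using powr_ge_zero[of a q] by linarith
qed

lemma young_simple:
  fixes a d q :: real
  assumes a: "0 \<le> a" and d: "0 \<le> d" and q: "1 < q"
  shows "a powr (q - 1) * d \<le> a powr q + d powr q"
proof (cases "d \<le> a")
  case True
  have "a powr (q - 1) * d \<le> a powr (q - 1) * a" using True a by (intro mult_left_mono) auto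
  also have "\<dots> = a powr q"
  proof (cases "a = 0")
    case False
    then show ?thesis using a powr_mult_base[of a "q - 1"] by (simp add: mult.commute)
  qed (use q in simp)
  finally show ?thesis by (smt (verit) powr_ge_zero)
next
  case False
  have "a powr (q - 1) \<le> d powr (q - 1)" using False a q by (intro powr_mono2) auto
  then have "a powr (q - 1) * d \<le> d powr (q - 1) * d" using d by (rule mult_right_mono)
  also have "\<dots> = d powr q"
  proof (cases "d = 0")
    case False
    then show ?thesis using d powr_mult_base[of d "q - 1"] by (simp add: mult.commute)
  qed (use q in simp)
  finally show ?thesis by (smt (verit) powr_ge_zero)
qed

lemma powr_sum_le:
  fixes x y q :: real
  assumes x: "0 \<le> x" and y: "0 \<le> y" and q: "0 \<le> q"
  shows "(x + y) powr q \<le> 2 powr q * (x powr q + y powr q)"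
proof -
  have "(x + y) powr q \<le> (2 * max x y) powr q" using x y q by (intro powr_mono2) auto
  also have "\<dots> = 2 powr q * (max x y) powr q" using x y by (simp add: powr_mult)
  also have "(max x y) powr q \<le> x powr q + y powr q"
    by (cases "x \<le> y") (auto simp: max_def)
  finally show ?thesis by (simp add: mult_left_mono)
qed

definition flux :: "real \<Rightarrow> real \<Rightarrow> 'a::real_inner \<Rightarrow> 'a" where
  "flux \<sigma> q P = (\<sigma> * norm P powr (q - 2)) *\<^sub>R P"

lemma Aop_flux: "Aop E s1 s2 p1 p2 y P = flux (sig E s1 s2 y) (pexp E p1 p2 y) P"
  by (simp add: Aop_def flux_def)

lemma flux_self:
  assumes q: "1 < q"
  shows "flux \<sigma> q P \<bullet> P = \<sigma> * norm P powr q"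
proof (cases "P = 0")
  case False
  have "norm P ^ 2 = norm P powr 2" using False by (simp add: powr_numeral)
  then have "norm P powr (q - 2) * norm P ^ 2 = norm P powr (q - 2 + 2)"
    by (simp only: powr_add)
  then have "norm P powr (q - 2) * norm P ^ 2 = norm P powr q" by simp
  then show ?thesis by (simp add: flux_def power2_norm_eq_inner[symmetric])
qed (use q in \<open>simp add: flux_def\<close>)

lemma flux_bound:
  assumes q: "1 < q" and s: "0 \<le> \<sigma>"
  shows "\<bar>flux \<sigma> q P \<bullet> z\<bar> \<le> \<sigma> * (norm P powr (q - 1) * norm z)"
proof (cases "P = 0")
  case False
  have "\<bar>flux \<sigma> q P \<bullet> z\<bar> = \<sigma> * norm P powr (q - 2) * \<bar>P \<bullet> z\<bar>"
    using s by (simp add: flux_def abs_mult)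
  also have "\<dots> \<le> \<sigma> * norm P powr (q - 2) * (norm P * norm z)"
    using s by (intro mult_left_mono Cauchy_Schwarz_ineq2) auto
  also have "\<dots> = \<sigma> * ((norm P * norm P powr (q - 2)) * norm z)" by (simp add: algebra_simps)
  also have "norm P * norm P powr (q - 2) = norm P powr (q - 1)"
    by (simp add: powr_mult_base)
  finally show ?thesis by simp
qed (use q in \<open>simp add: flux_def\<close>)

text \<open>Pointwise energy inequality: testing the flux at \<open>\<xi> + d\<close> with \<open>\<xi> + d\<close> and absorbing the
  \<open>\<xi>\<close>-part by Young's inequality,
  \<open>\<sigma> |\<xi>+d|\<^sup>q \<le> 2\<^sup>q \<sigma> |\<xi>|\<^sup>q + 2 A(\<xi>+d)\<cdot>d\<close>.\<close>
lemma flux_energy_pointwise: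
  assumes q: "1 < q" and s: "0 \<le> \<sigma>"
  shows "\<sigma> * norm (\<xi> + d) powr q \<le> 2 powr q * \<sigma> * norm \<xi> powr q + 2 * (flux \<sigma> q (\<xi> + d) \<bullet> d)"
proof -
  have "\<sigma> * norm (\<xi> + d) powr q = flux \<sigma> q (\<xi> + d) \<bullet> \<xi> + flux \<sigma> q (\<xi> + d) \<bullet> d"
    by (simp add: flux_self[OF q, symmetric] inner_add_right)
  also have "flux \<sigma> q (\<xi> + d) \<bullet> \<xi> \<le> \<sigma> * (norm (\<xi> + d) powr (q - 1) * norm \<xi>)"
    using flux_bound[OF q s, of "\<xi> + d" \<xi>] by linarith
  also have "\<dots> \<le> \<sigma> * (norm (\<xi> + d) powr q / 2 + 2 powr (q - 1) * norm \<xi> powr q)"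
    using s q by (intro mult_left_mono young_half) auto
  finally have "\<sigma> * norm (\<xi> + d) powr q \<le> 2 * 2 powr (q - 1) * \<sigma> * norm \<xi> powr q + 2 * (flux \<sigma> q (\<xi> + d) \<bullet> d)"
    by (simp add: algebra_simps)
  also have "2 * 2 powr (q - 1) = (2 powr q :: real)"
    by (simp add: powr_diff)
  finally show ?thesis .
qed

lemma flux_test_bound:
  assumes q: "1 < q" and s: "0 \<le> \<sigma>"
  shows "\<bar>flux \<sigma> q (\<xi> + d) \<bullet> d\<bar> \<le> \<sigma> * (norm (\<xi> + d) powr q + norm d powr q)"
proof -
  have "\<bar>flux \<sigma> q (\<xi> + d) \<bullet> d\<bar> \<le> \<sigma> * (norm (\<xi> + d) powr (q - 1) * norm d)"
    by (rule flux_bound[OF q s])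
  also have "\<dots> \<le> \<sigma> * (norm (\<xi> + d) powr q + norm d powr q)"
    using s q by (intro mult_left_mono young_simple) auto
  finally show ?thesis .
qed

lemma flux_energy_bounded:
  assumes m: "0 < m" "m \<le> \<sigma>" "\<sigma> \<le> S" and q: "1 < q" "q \<le> Q" and \<xi>: "norm \<xi> powr q \<le> N"
  shows "m * norm (\<xi> + d) powr q \<le> 2 powr Q * S * N + 2 * (flux \<sigma> q (\<xi> + d) \<bullet> d)"
proof -
  have "m * norm (\<xi> + d) powr q \<le> \<sigma> * norm (\<xi> + d) powr q"
    using m by (intro mult_right_mono) auto
  also have "\<dots> \<le> 2 powr q * \<sigma> * norm \<xi> powr q + 2 * (flux \<sigma> q (\<xi> + d) \<bullet> d)"
    using m q by (intro flux_energy_pointwise) auto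
  also have "2 powr q * \<sigma> * norm \<xi> powr q \<le> 2 powr Q * S * N"
    using m q \<xi> by (intro mult_mono powr_mono) auto
  finally show ?thesis by simp
qed

lemma norm_add_powr_bounded:
  assumes q: "0 \<le> q" "q \<le> Q" and \<xi>: "norm \<xi> powr q \<le> N"
  shows "norm (\<xi> + d) powr q \<le> 2 powr Q * N + 2 powr Q * norm d powr q"
proof -
  have "norm (\<xi> + d) powr q \<le> (norm \<xi> + norm d) powr q"
    using q by (intro powr_mono2 norm_triangle_ineq) auto
  also have "\<dots> \<le> 2 powr q * (norm \<xi> powr q + norm d powr q)"
    using q by (intro powr_sum_le) auto
  also have "\<dots> \<le> 2 powr Q * (N + norm d powr q)"
    using q \<xi> powr_mono[of q Q 2] by (intro mult_mono add_mono) auto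
  finally show ?thesis by (simp add: algebra_simps)
qed

text \<open>Let \<open>D\<close> be a gradient field on a set \<open>Y\<close> of finite
  measure which is orthogonal, in the flux pairing at \<open>\<xi> + D\<close>, to itself (this is what
  testing the cell problem with its own solution gives).\<close>
lemma cell_energy_estimate:
  fixes Y :: "'a::euclidean_space set" and D :: "'a \<Rightarrow> 'b::euclidean_space" and \<sigma> q :: "'a \<Rightarrow> real"
  assumes Y[measurable]: "Y \<in> sets lebesgue" and Y_fin: "emeasure lebesgue Y < \<infinity>"
    and [measurable]: "\<sigma> \<in> borel_measurable lebesgue" "q \<in> borel_measurable lebesgue"
      "D \<in> borel_measurable lebesgue"
    and m: "0 < m" and \<sigma>_bounds: "\<And>y. m \<le> \<sigma> y" "\<And>y. \<sigma> y \<le> S"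
    and q_bounds: "\<And>y. 1 < q y" "\<And>y. q y \<le> Q"
    and \<xi>_bound: "\<And>y. norm \<xi> powr q y \<le> N"
    and D_int: "integrable lebesgue (\<lambda>y. indicator Y y * norm (D y) powr q y)"
    and orth: "(\<integral>y. indicator Y y * (flux (\<sigma> y) (q y) (\<xi> + D y) \<bullet> D y) \<partial>lebesgue) = 0"
  shows "integrable lebesgue (\<lambda>y. indicator Y y * norm (\<xi> + D y) powr q y)"
    and "(\<integral>y. indicator Y y * norm (\<xi> + D y) powr q y \<partial>lebesgue) \<le> 2 powr Q * S * N * measure lebesgue Y / m"
proof -
  define I :: "'a \<Rightarrow> real" where "I = indicator Y"
  define energy where "energy = (\<lambda>y. I y * norm (\<xi> + D y) powr q y)"
  define test where "test = (\<lambda>y. I y * (flux (\<sigma> y) (q y) (\<xi> + D y) \<bullet> D y))"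
  have I_int: "integrable lebesgue I" using Y_fin unfolding I_def by simp
  have D_int': "integrable lebesgue (\<lambda>y. I y * norm (D y) powr q y)" using D_int by (simp add: I_def)
  have [measurable]: "I \<in> borel_measurable lebesgue" "energy \<in> borel_measurable lebesgue"
      "test \<in> borel_measurable lebesgue"
    unfolding I_def energy_def test_def flux_def by measurable
  have energy_int: "integrable lebesgue energy"
  proof (rule Bochner_Integration.integrable_bound[OF
        Bochner_Integration.integrable_add[OF integrable_mult_right[OF I_int, of "2 powr Q * N"] integrable_mult_right[OF D_int', of "2 powr Q"]]])
    have "norm (\<xi> + D y) powr q y \<le> 2 powr Q * N + 2 powr Q * norm (D y) powr q y" for y
      using q_bounds[of y] \<xi>_bound[of y] by (intro norm_add_powr_bounded) auto
    then show "AE y in lebesgue. norm (energy y) \<le> norm (2 powr Q * N * I y + 2 powr Q * (I y * norm (D y) powr q y))"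
      by (intro AE_I2) (auto simp: energy_def I_def indicator_def intro: order_trans[OF _ abs_ge_self])
  qed simp
  have test_int: "integrable lebesgue test"
  proof (rule Bochner_Integration.integrable_bound[OF
        Bochner_Integration.integrable_add[OF integrable_mult_right[OF energy_int, of S] integrable_mult_right[OF D_int', of S]]])
    have "\<bar>flux (\<sigma> y) (q y) (\<xi> + D y) \<bullet> D y\<bar> \<le> S * (norm (\<xi> + D y) powr q y + norm (D y) powr q y)" for y
      using flux_test_bound[of "q y" "\<sigma> y" \<xi> "D y"] q_bounds(1)[of y] \<sigma>_bounds[of y] m
      by (smt (verit, best) mult_right_mono powr_ge_zero)
    then show "AE y in lebesgue. norm (test y) \<le> norm (S * energy y + S * (I y * norm (D y) powr q y))"
      by (intro AE_I2) (auto simp: test_def energy_def I_def indicator_def algebra_simps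
          intro: order_trans[OF _ abs_ge_self])
  qed simp
  have pointwise: "m * energy y \<le> 2 powr Q * S * N * I y + 2 * test y" for y
    using flux_energy_bounded[OF m \<sigma>_bounds(1,2)[of y] q_bounds[of y] \<xi>_bound[of y], of "D y"]
    by (auto simp: energy_def test_def I_def indicator_def)
  have "m * (\<integral>y. energy y \<partial>lebesgue) = (\<integral>y. m * energy y \<partial>lebesgue)" by simp
  also have "\<dots> \<le> (\<integral>y. 2 powr Q * S * N * I y + 2 * test y \<partial>lebesgue)"
    using energy_int I_int test_int pointwise by (intro integral_mono) auto
  also have "\<dots> = 2 powr Q * S * N * measure lebesgue Y"
    using I_int test_int orth by (simp add: I_def test_def)
  finally show "(\<integral>y. indicator Y y * norm (\<xi> + D y) powr q y \<partial>lebesgue) \<le> 2 powr Q * S * N * measure lebesgue Y / m"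
    using m by (simp add: energy_def I_def field_simps)
  show "integrable lebesgue (\<lambda>y. indicator Y y * norm (\<xi> + D y) powr q y)"
    using energy_int by (simp add: energy_def I_def)
qed

definition cell_const :: "real \<Rightarrow> real \<Rightarrow> real \<Rightarrow> real" where
  "cell_const s1 s2 p2 = 2 powr p2 * max s1 s2 / min s1 s2"

lemma cell_const_nonneg: "0 < s1 \<Longrightarrow> 0 < s2 \<Longrightarrow> 0 \<le> cell_const s1 s2 p2"
  by (simp add: cell_const_def)

text \<open>Cell energy estimate for the correctors:
  \<open>\<integral>\<^sub>Y |\<xi> + \<nabla>v\<^sub>\<xi>|\<^sup>p\<^sup>(\<^sup>y\<^sup>) dy \<le> K (|\<xi>|\<^sup>p\<^sup>1 + |\<xi>|\<^sup>p\<^sup>2)\<close>, obtained by testing the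
  cell problem with \<open>v\<^sub>\<xi>\<close> itself.\<close>
lemma cell_energy:
  fixes E :: "('n::finite) pt set"
  assumes s: "0 < s1" "0 < s2" and p: "1 < p1" "p1 \<le> p2"
    and E[measurable]: "E \<in> sets lebesgue"
    and cell: "cell_solutions E s1 s2 p1 p2 v Dv"
  shows "integrable lebesgue (\<lambda>y. indicator Ycell y * norm (\<xi> + Dv \<xi> y) powr pexp E p1 p2 y)"
    and "(\<integral>y. indicator Ycell y * norm (\<xi> + Dv \<xi> y) powr pexp E p1 p2 y \<partial>lebesgue)
           \<le> cell_const s1 s2 p2 * (norm \<xi> powr p1 + norm \<xi> powr p2)"
proof -
  have ps: "per_space E p1 p2 (v \<xi>) (Dv \<xi>)"
    and orth: "(LINT y:Ycell|lebesgue. Aop E s1 s2 p1 p2 y (\<xi> + Dv \<xi> y) \<bullet> Dv \<xi> y) = 0"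
    using cell unfolding cell_solutions_def by blast+
  have [measurable]: "Dv \<xi> \<in> borel_measurable lebesgue"
    using ps by (intro loc_int_measurable) (simp add: per_space_def weak_grad_def)
  have "set_integrable lebesgue Ycell (\<lambda>y. norm (Dv \<xi> y) powr pexp E p1 p2 y)"
    using ps unfolding per_space_def by blast
  then have D_int: "integrable lebesgue (\<lambda>y. indicator Ycell y * norm (Dv \<xi> y) powr pexp E p1 p2 y)"
    by (simp add: set_integrable_def)
  have orth': "(\<integral>y. indicator Ycell y * (flux (sig E s1 s2 y) (pexp E p1 p2 y) (\<xi> + Dv \<xi> y) \<bullet> Dv \<xi> y) \<partial>lebesgue) = 0"
    using orth by (simp add: set_lebesgue_integral_def Aop_flux)
  note est = cell_energy_estimate[where m="min s1 s2" and S="max s1 s2" and Q=p2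
      and N="norm \<xi> powr p1 + norm \<xi> powr p2", OF Ycell_sets _ sig_meas[OF E] pexp_meas[OF E] _ _ _ _ _ _ _ D_int orth']
  have hyps: "min s1 s2 \<le> sig E s1 s2 y" "sig E s1 s2 y \<le> max s1 s2" "1 < pexp E p1 p2 y"
      "pexp E p1 p2 y \<le> p2" "norm \<xi> powr pexp E p1 p2 y \<le> norm \<xi> powr p1 + norm \<xi> powr p2" for y
    using p by (auto simp: sig_def pexp_def)
  show "integrable lebesgue (\<lambda>y. indicator Ycell y * norm (\<xi> + Dv \<xi> y) powr pexp E p1 p2 y)"
    using est(1) hyps s by (simp add: Ycell_emeasure)
  show "(\<integral>y. indicator Ycell y * norm (\<xi> + Dv \<xi> y) powr pexp E p1 p2 y \<partial>lebesgue)
      \<le> cell_const s1 s2 p2 * (norm \<xi> powr p1 + norm \<xi> powr p2)"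
    using est(2) hyps s by (simp add: Ycell_emeasure Ycell_measure cell_const_def)
qed

section \<open>The \<open>\<epsilon>\<close>-cells\<close>

lemma eps_cell_scaled:
  assumes e: "\<epsilon> > 0"
  shows "x \<in> eps_cell \<epsilon> k \<longleftrightarrow> (1/\<epsilon>) *\<^sub>R x - intvec k \<in> Ycell"
proof -
  have "\<epsilon> * of_int (k i) < x $ i \<and> x $ i < \<epsilon> * (of_int (k i) + 1) \<longleftrightarrow>
        0 < x $ i / \<epsilon> - of_int (k i) \<and> x $ i / \<epsilon> - of_int (k i) < 1" for i
    using e by (auto simp: field_simps)
  then show ?thesis by (simp add: eps_cell_def Ycell_def intvec_def)
qed

lemma eps_cell_box: "eps_cell \<epsilon> k = box (\<epsilon> *\<^sub>R intvec k) (\<epsilon> *\<^sub>R (intvec k + (\<chi> i. 1)) :: ('n::finite) pt)"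
  by (auto simp: eps_cell_def mem_box_cart intvec_def)

lemma eps_cell_sets[measurable]: "eps_cell \<epsilon> k \<in> sets lebesgue"
  unfolding eps_cell_box by simp

lemma eps_cell_emeasure:
  assumes e: "\<epsilon> > 0"
  shows "emeasure lebesgue (eps_cell \<epsilon> k :: ('n::finite) pt set) = ennreal (\<epsilon> ^ CARD('n))"
proof -
  have "emeasure lebesgue (eps_cell \<epsilon> k :: 'n pt set) = emeasure lborel (box (\<epsilon> *\<^sub>R intvec k) (\<epsilon> *\<^sub>R (intvec k + (\<chi> i. 1)) :: 'n pt))"
    unfolding eps_cell_box by (simp add: emeasure_completion)
  also have "\<dots> = ennreal (\<Prod>b\<in>(Basis :: 'n pt set). \<epsilon>)"
  proof -
    have d: "\<epsilon> *\<^sub>R (intvec k + (\<chi> i. 1)) - \<epsilon> *\<^sub>R intvec k = ((\<chi> i. \<epsilon>) :: 'n pt)"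
      by (simp add: vec_eq_iff algebra_simps)
    have hb: "(\<epsilon> *\<^sub>R (intvec k + (\<chi> i. 1)) - \<epsilon> *\<^sub>R intvec k) \<bullet> b = \<epsilon>" if "b \<in> (Basis :: 'n pt set)" for b
      using that unfolding d by (auto simp: Basis_vec_def inner_axis)
    have hl: "(\<epsilon> *\<^sub>R intvec k) \<bullet> b \<le> (\<epsilon> *\<^sub>R (intvec k + (\<chi> i. 1))) \<bullet> b" if "b \<in> (Basis :: 'n pt set)" for b
      using that e by (auto simp: Basis_vec_def inner_axis intvec_def)
    show ?thesis using hb hl by (subst emeasure_lborel_box_eq) (auto intro!: prod.cong)
  qed
  also have "(\<Prod>b\<in>(Basis :: 'n pt set). \<epsilon>) = \<epsilon> ^ CARD('n)" by simp
  finally show ?thesis .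
qed

lemma eps_cell_measure:
  assumes e: "\<epsilon> > 0"
  shows "measure lebesgue (eps_cell \<epsilon> k :: ('n::finite) pt set) = \<epsilon> ^ CARD('n)"
  unfolding measure_def using e by (subst eps_cell_emeasure[OF e]) simp

lemma eps_cell_disj:
  assumes e: "\<epsilon> > 0" and x: "x \<in> eps_cell \<epsilon> k" "x \<in> eps_cell \<epsilon> k'"
  shows "k = k'"
proof
  fix i
  have "\<epsilon> * of_int (k i) < x $ i" "x $ i < \<epsilon> * (of_int (k i) + 1)"
       "\<epsilon> * of_int (k' i) < x $ i" "x $ i < \<epsilon> * (of_int (k' i) + 1)"
    using x by (auto simp: eps_cell_def)
  then have "of_int (k i) < x $ i / \<epsilon>" "x $ i / \<epsilon> < of_int (k i) + 1"
      "of_int (k' i) < x $ i / \<epsilon>" "x $ i / \<epsilon> < of_int (k' i) + 1"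
    using e by (auto simp: field_simps)
  then have "k i < k' i + 1" "k' i < k i + 1" by linarith+
  then show "k i = k' i" by linarith
qed

text \<open>Only finitely many \<open>\<epsilon>\<close>-cells meet a bounded set, and almost every point lies in
  some \<open>\<epsilon>\<close>-cell (the cell walls are contained in countably many hyperplanes).\<close>
lemma finite_cells:
  assumes e: "\<epsilon> > 0" and b: "bounded (\<Omega> :: ('n::finite) pt set)"
  shows "finite {k. eps_cell \<epsilon> k \<inter> \<Omega> \<noteq> {}}"
proof -
  obtain R where R: "\<And>x. x \<in> \<Omega> \<Longrightarrow> norm x \<le> R" using b unfolding bounded_iff by blast
  define S where "S = {\<lfloor>- R / \<epsilon>\<rfloor> - 1 .. \<lceil>R / \<epsilon>\<rceil>}"
  have "{k. eps_cell \<epsilon> k \<inter> \<Omega> \<noteq> {}} \<subseteq> {f. \<forall>x. (x \<in> UNIV \<longrightarrow> f x \<in> S) \<and> (x \<notin> UNIV \<longrightarrow> f x = 0)}"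
  proof safe
    fix k x i assume x: "x \<in> eps_cell \<epsilon> k" "x \<in> \<Omega>"
    have xi: "\<bar>x $ i\<bar> \<le> R" using R[OF x(2)] component_le_norm_cart[of x i] by simp
    have "\<epsilon> * of_int (k i) < x $ i" "x $ i < \<epsilon> * (of_int (k i) + 1)" using x by (auto simp: eps_cell_def)
    then have "of_int (k i) < x $ i / \<epsilon>" "x $ i / \<epsilon> < of_int (k i) + 1"
      using e by (auto simp: field_simps)
    moreover have "x $ i / \<epsilon> \<le> R / \<epsilon>" using divide_right_mono[of "x $ i" R \<epsilon>] xi e by simp
    moreover have "(- R) / \<epsilon> \<le> x $ i / \<epsilon>" using divide_right_mono[of "- R" "x $ i" \<epsilon>] xi e by simp
    ultimately have "of_int (k i) < R / \<epsilon>" "- R / \<epsilon> < of_int (k i) + 1" by linarith+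
    then have "k i \<le> \<lceil>R / \<epsilon>\<rceil>" "\<lfloor>- R / \<epsilon>\<rfloor> - 1 \<le> k i"
      by (simp_all add: le_ceiling_iff floor_le_iff) linarith+
    then show "k i \<in> S" unfolding S_def by simp
  qed simp
  moreover have "finite {f. \<forall>x. (x \<in> (UNIV::'n set) \<longrightarrow> f x \<in> S) \<and> (x \<notin> UNIV \<longrightarrow> f x = (0::int))}"
    by (rule finite_set_of_finite_funs) (auto simp: S_def)
  ultimately show ?thesis by (rule finite_subset)
qed

lemma AE_in_cell:
  assumes e: "\<epsilon> > 0"
  shows "AE x in lebesgue. \<exists>k. (x :: ('n::finite) pt) \<in> eps_cell \<epsilon> k"
proof -
  have hyp: "AE x in lebesgue. (x :: 'n pt) $ i \<noteq> \<epsilon> * of_int m" for i :: 'n and m :: int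
  proof -
    have "negligible {x :: 'n pt. axis i 1 \<bullet> x = \<epsilon> * of_int m}"
      by (rule negligible_hyperplane) (simp add: axis_eq_0_iff)
    then have "{x :: 'n pt. axis i 1 \<bullet> x = \<epsilon> * of_int m} \<in> null_sets lebesgue"
      by (simp add: negligible_iff_null_sets)
    from AE_not_in[OF this] show ?thesis by (simp add: inner_axis')
  qed
  have h1: "AE x in lebesgue. \<forall>m::int. (x :: 'n pt) $ i \<noteq> \<epsilon> * of_int m" for i :: 'n
    by (subst AE_all_countable) (intro allI hyp)
  have "AE x in lebesgue. \<forall>i::'n. \<forall>m::int. (x :: 'n pt) $ i \<noteq> \<epsilon> * of_int m"
    by (subst AE_all_countable) (intro allI h1)
  then show ?thesis
  proof eventually_elim
    case (elim x)
    define k where "k = (\<lambda>i. \<lfloor>x $ i / \<epsilon>\<rfloor>)"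
    have "x \<in> eps_cell \<epsilon> k"
      unfolding eps_cell_def
    proof (safe)
      fix i
      have a: "of_int (k i) \<le> x $ i / \<epsilon>" "x $ i / \<epsilon> < of_int (k i) + 1"
        unfolding k_def by linarith+
      then have "\<epsilon> * of_int (k i) \<le> x $ i" "x $ i < \<epsilon> * (of_int (k i) + 1)"
        using e by (auto simp: field_simps)
      moreover have "x $ i \<noteq> \<epsilon> * of_int (k i)" using elim by blast
      ultimately show "\<epsilon> * of_int (k i) < x $ i" "x $ i < \<epsilon> * (of_int (k i) + 1)" by auto
    qed
    then show ?case by blast
  qed
qed


text \<open>Integral over an \<open>\<epsilon>\<close>-cell of a rescaled, almost-periodic nonnegative function:
  the change of variables \<open>x = \<epsilon> (k + y)\<close> reduces it to \<open>\<epsilon>\<^sup>n\<close> times the integral over \<open>Y\<close>.\<close>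
lemma nn_integral_rescaled_cell:
  fixes f :: "('n::finite) pt \<Rightarrow> ennreal"
  assumes e: "\<epsilon> > 0" and f[measurable]: "f \<in> borel_measurable lebesgue"
    and per: "AE y in lebesgue. f (intvec k + y) = f y"
  shows "(\<integral>\<^sup>+x. indicator (eps_cell \<epsilon> k) x * f ((1/\<epsilon>) *\<^sub>R x) \<partial>lebesgue)
       = ennreal (\<epsilon> ^ CARD('n)) * (\<integral>\<^sup>+y. indicator Ycell y * f y \<partial>lebesgue)"
proof -
  define H where "H = (\<lambda>y. indicator Ycell (y - intvec k) * f y)"
  have [measurable]: "(\<lambda>y. indicator Ycell (y - intvec k) :: ennreal) \<in> borel_measurable lebesgue"
    using measurable_comp[OF lebesgue_transl(2)[of "- intvec k"] borel_measurable_indicator[OF Ycell_sets]]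
    by (simp add: comp_def)
  have H_meas[measurable]: "H \<in> borel_measurable lebesgue" unfolding H_def by measurable
  have "indicator (eps_cell \<epsilon> k) x * f ((1/\<epsilon>) *\<^sub>R x) = H ((1/\<epsilon>) *\<^sub>R x)" for x
    using eps_cell_scaled[OF e, of x k] by (simp add: H_def indicator_def)
  then have "(\<integral>\<^sup>+x. indicator (eps_cell \<epsilon> k) x * f ((1/\<epsilon>) *\<^sub>R x) \<partial>lebesgue)
      = (\<integral>\<^sup>+x. H ((1/\<epsilon>) *\<^sub>R x) \<partial>lebesgue)" by simp
  also have "\<dots> = ennreal (\<bar>\<epsilon>\<bar> ^ DIM('n pt)) * (\<integral>\<^sup>+y. H ((1/\<epsilon>) *\<^sub>R (0 + \<epsilon> *\<^sub>R y)) \<partial>lebesgue)"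
    using measurable_comp[OF lebesgue_measurable_scaling[of "1/\<epsilon>"] H_meas] e
    by (intro nn_integral_affine) (auto simp: comp_def)
  also have "(\<integral>\<^sup>+y. H ((1/\<epsilon>) *\<^sub>R (0 + \<epsilon> *\<^sub>R y)) \<partial>lebesgue) = integral\<^sup>N lebesgue H"
    using e by simp
  also have "\<dots> = (\<integral>\<^sup>+y. H (intvec k + y) \<partial>lebesgue)"
    using nn_integral_affine[OF H_meas, of 1 "intvec k"] by simp
  also have "\<dots> = (\<integral>\<^sup>+y. indicator Ycell y * f y \<partial>lebesgue)"
    using per by (intro nn_integral_cong_AE) (auto simp: H_def)
  finally show ?thesis using e by simp
qed

text \<open>Energy of the rescaled corrector field \<open>P\<^sub>\<epsilon>(x, \<xi>)\<close> on one \<open>\<epsilon>\<close>-cell, for a constant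
  vector \<open>\<xi>\<close>: it is \<open>\<epsilon>\<^sup>n\<close> times the cell energy, by periodicity of \<open>\<nabla>v\<^sub>\<xi>\<close> and of the phases.\<close>
lemma scaled_cell_energy:
  fixes E :: "('n::finite) pt set" and \<xi> :: "'n pt"
  assumes e: "\<epsilon> > 0" and s: "0 < s1" "0 < s2" and p: "1 < p1" "p1 \<le> p2"
    and micro: "dispersed E \<or> layered E"
    and cell: "cell_solutions E s1 s2 p1 p2 v Dv"
  defines "G \<equiv> \<lambda>y. norm (\<xi> + Dv \<xi> y) powr pexp E p1 p2 y"
  shows "(\<integral>\<^sup>+ x. ennreal (indicator (eps_cell \<epsilon> k) x * G ((1/\<epsilon>) *\<^sub>R x)) \<partial>lebesgue)
          \<le> ennreal (\<epsilon> ^ CARD('n) * (cell_const s1 s2 p2 * (norm \<xi> powr p1 + norm \<xi> powr p2)))"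
    and "(\<lambda>x. ennreal (indicator (eps_cell \<epsilon> k) x * G ((1/\<epsilon>) *\<^sub>R x))) \<in> borel_measurable lebesgue"
proof -
  have E[measurable]: "E \<in> sets lebesgue" using microstructure_borel[OF micro] by auto
  have ps: "per_space E p1 p2 (v \<xi>) (Dv \<xi>)" using cell unfolding cell_solutions_def by blast
  have wg: "weak_grad UNIV (v \<xi>) (Dv \<xi>)" using ps unfolding per_space_def by auto
  have [measurable]: "Dv \<xi> \<in> borel_measurable lebesgue"
    using wg by (intro loc_int_measurable) (simp add: weak_grad_def)
  have G_meas[measurable]: "G \<in> borel_measurable lebesgue" unfolding G_def by measurable
  have "AE y in lebesgue. Dv \<xi> (y + intvec k) = Dv \<xi> y"
    using ps by (intro weak_grad_periodic[OF wg] periodic_shift_intvec) (simp add: per_space_def)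
  then have per: "AE y in lebesgue. ennreal (G (intvec k + y)) = ennreal (G y)"
    by eventually_elim (simp add: G_def pexp_def microstructure_periodic[OF micro] add.commute)
  have split: "ennreal (indicator (eps_cell \<epsilon> k) x * G ((1/\<epsilon>) *\<^sub>R x))
      = indicator (eps_cell \<epsilon> k) x * ennreal (G ((1/\<epsilon>) *\<^sub>R x))" for x
    by (simp add: indicator_def)
  have resc: "(\<integral>\<^sup>+x. indicator (eps_cell \<epsilon> k) x * ennreal (G ((1/\<epsilon>) *\<^sub>R x)) \<partial>lebesgue)
      = ennreal (\<epsilon> ^ CARD('n)) * (\<integral>\<^sup>+y. indicator Ycell y * ennreal (G y) \<partial>lebesgue)"
    by (rule nn_integral_rescaled_cell[OF e _ per]) simp
  note ce = cell_energy[OF s p E cell, of \<xi>]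
  have "(\<integral>\<^sup>+y. indicator Ycell y * ennreal (G y) \<partial>lebesgue) = (\<integral>\<^sup>+y. ennreal (indicator Ycell y * G y) \<partial>lebesgue)"
    by (intro nn_integral_cong) (simp add: indicator_def)
  also have "\<dots> = ennreal (\<integral>y. indicator Ycell y * G y \<partial>lebesgue)"
    using ce(1) by (intro nn_integral_eq_integral) (auto simp: G_def)
  also have "\<dots> \<le> ennreal (cell_const s1 s2 p2 * (norm \<xi> powr p1 + norm \<xi> powr p2))"
    using ce(2) by (intro ennreal_leI) (simp add: G_def)
  finally have "ennreal (\<epsilon> ^ CARD('n)) * (\<integral>\<^sup>+y. indicator Ycell y * ennreal (G y) \<partial>lebesgue)
      \<le> ennreal (\<epsilon> ^ CARD('n)) * ennreal (cell_const s1 s2 p2 * (norm \<xi> powr p1 + norm \<xi> powr p2))"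
    by (intro mult_left_mono) auto
  then show "(\<integral>\<^sup>+ x. ennreal (indicator (eps_cell \<epsilon> k) x * G ((1/\<epsilon>) *\<^sub>R x)) \<partial>lebesgue)
      \<le> ennreal (\<epsilon> ^ CARD('n) * (cell_const s1 s2 p2 * (norm \<xi> powr p1 + norm \<xi> powr p2)))"
    unfolding split resc using e s
    by (simp add: ennreal_mult cell_const_nonneg)
  show "(\<lambda>x. ennreal (indicator (eps_cell \<epsilon> k) x * G ((1/\<epsilon>) *\<^sub>R x))) \<in> borel_measurable lebesgue"
    using measurable_comp[OF lebesgue_measurable_scaling[of "1/\<epsilon>"] G_meas] by (simp add: comp_def)
qed

section \<open>Cell averages and Jensen's inequality\<close>

lemma tangent_powr:
  fixes M t p :: real
  assumes M: "M > 0" and t: "t \<ge> 0" and p: "p \<ge> 1"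
  shows "M powr p + p * M powr (p - 1) * (t - M) \<le> t powr p"
proof (cases "t > 0")
  case True
  have "p * M powr (p - 1) * (t - M) \<le> t powr p - M powr p"
  proof (rule convex_on_imp_above_tangent[OF powr_convex[OF p]])
    show "connected {0::real<..}" by simp
    show "M \<in> interior {0<..}" using M by (subst interior_open) auto
    show "t \<in> {0<..}" using True by simp
    show "((\<lambda>x. x powr p) has_real_derivative p * M powr (p - 1)) (at M within {0<..})"
      using has_real_derivative_powr[OF M] by (rule has_field_derivative_at_within)
  qed
  then show ?thesis by simp
next
  case False
  then have t0: "t = 0" using t by simp
  have "M powr (p - 1) * M = M powr p" using M powr_mult_base[of M "p - 1"] by (simp add: mult.commute)
  then have "M powr p + p * M powr (p - 1) * (t - M) = (1 - p) * M powr p"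
    using t0 by (simp add: algebra_simps)
  also have "\<dots> \<le> 0" using p by (simp add: mult_nonpos_nonneg)
  finally show ?thesis using t0 p by simp
qed

lemma jensen_set:
  fixes g :: "'a::euclidean_space \<Rightarrow> real" and Q :: "'a set"
  assumes Qs: "Q \<in> sets lebesgue" and Qm: "0 < measure lebesgue Q" and Qf: "emeasure lebesgue Q < \<infinity>"
    and g0: "\<And>x. 0 \<le> g x" and gi: "integrable lebesgue (\<lambda>x. indicator Q x * g x)"
    and gpi: "integrable lebesgue (\<lambda>x. indicator Q x * g x powr p)" and p: "1 \<le> p"
  shows "((\<integral>x. indicator Q x * g x \<partial>lebesgue) / measure lebesgue Q) powr p
           \<le> (\<integral>x. indicator Q x * g x powr p \<partial>lebesgue) / measure lebesgue Q"
proof -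
  define M where "M = (\<integral>x. indicator Q x * g x \<partial>lebesgue) / measure lebesgue Q"
  have M0: "0 \<le> M" unfolding M_def using g0 Qm by (intro divide_nonneg_pos Bochner_Integration.integral_nonneg) auto
  have Qi: "integrable lebesgue (indicator Q :: 'a \<Rightarrow> real)" using Qs Qf by auto
  have intQ: "(\<integral>x. indicator Q x \<partial>lebesgue) = measure lebesgue Q" using Qs by simp
  show ?thesis
  proof (cases "M = 0")
    case True
    have "0 \<le> (\<integral>x. indicator Q x * g x powr p \<partial>lebesgue)" by (intro Bochner_Integration.integral_nonneg) auto
    then show ?thesis using True Qm unfolding M_def[symmetric] using p by simp
  next
    case False
    then have Mp: "M > 0" using M0 by simp
    let ?c = "p * M powr (p - 1)"
    have pt: "indicator Q x * (M powr p + ?c * (g x - M)) \<le> indicator Q x * g x powr p" for x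
      using tangent_powr[OF Mp g0 p] by (auto simp: indicator_def)
    define A0 where "A0 = M powr p - ?c * M"
    have e: "indicator Q x * (M powr p + ?c * (g x - M)) = A0 * indicator Q x + ?c * (indicator Q x * g x)" for x
      unfolding A0_def by (simp add: algebra_simps)
    have "(\<integral>x. A0 * indicator Q x + ?c * (indicator Q x * g x) \<partial>lebesgue)
        = (\<integral>x. A0 * indicator Q x \<partial>lebesgue) + (\<integral>x. ?c * (indicator Q x * g x) \<partial>lebesgue)"
      by (rule Bochner_Integration.integral_add) (use Qi gi in auto)
    also have "\<dots> = A0 * measure lebesgue Q + ?c * (\<integral>x. indicator Q x * g x \<partial>lebesgue)"
      using intQ by simp
    also have "(\<integral>x. indicator Q x * g x \<partial>lebesgue) = M * measure lebesgue Q"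
      unfolding M_def using Qm by simp
    finally have "M powr p * measure lebesgue Q = (\<integral>x. indicator Q x * (M powr p + ?c * (g x - M)) \<partial>lebesgue)"
      unfolding e A0_def by (simp add: algebra_simps)
    also have "\<dots> \<le> (\<integral>x. indicator Q x * g x powr p \<partial>lebesgue)"
    proof (rule integral_mono[OF _ gpi])
      show "integrable lebesgue (\<lambda>x. indicator Q x * (M powr p + ?c * (g x - M)))"
        unfolding e using Qi gi by simp
    qed (use pt in auto)
    finally show ?thesis unfolding M_def[symmetric] using Qm by (simp add: field_simps)
  qed
qed

text \<open>\<open>t \<le> 1 + t\<^sup>p\<close> for \<open>p \<ge> 1\<close>: on sets of finite measure \<open>L\<^sup>p\<close> functions are integrable.\<close>
lemma le_one_plus_powr:
  fixes t p :: real
  assumes t: "0 \<le> t" and p: "1 \<le> p"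
  shows "t \<le> 1 + t powr p"
proof (cases "t \<le> 1")
  case True then show ?thesis using powr_ge_zero[of t p] by linarith
next
  case False
  then have "t powr 1 \<le> t powr p" using p by (intro powr_mono) auto
  then show ?thesis using False by simp
qed


definition cell_mean :: "('n::finite) pt set \<Rightarrow> real \<Rightarrow> ('n pt \<Rightarrow> 'n pt) \<Rightarrow> ('n \<Rightarrow> int) \<Rightarrow> 'n pt" where
  "cell_mean \<Omega> \<epsilon> g k =
     (if eps_cell \<epsilon> k \<subseteq> \<Omega> then (1 / \<epsilon> ^ CARD('n)) *\<^sub>R (LINT y:eps_cell \<epsilon> k|lebesgue. g y) else 0)"

lemma Mavg_on_cell:
  assumes e: "\<epsilon> > 0" and x: "x \<in> eps_cell \<epsilon> k"
  shows "Mavg \<Omega> \<epsilon> g x = cell_mean \<Omega> \<epsilon> g k"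
proof (cases "eps_cell \<epsilon> k \<subseteq> \<Omega>")
  case True
  then have ex: "\<exists>k. eps_cell \<epsilon> k \<subseteq> \<Omega> \<and> x \<in> eps_cell \<epsilon> k" using x by blast
  have "(SOME k. eps_cell \<epsilon> k \<subseteq> \<Omega> \<and> x \<in> eps_cell \<epsilon> k) = k"
    using someI_ex[OF ex] eps_cell_disj[OF e _ x] by blast
  then show ?thesis using ex True unfolding Mavg_def cell_mean_def by (simp add: Let_def)
next
  case False
  then have "\<not> (\<exists>k. eps_cell \<epsilon> k \<subseteq> \<Omega> \<and> x \<in> eps_cell \<epsilon> k)"
    using eps_cell_disj[OF e _ x] by blast
  then have "Mavg \<Omega> \<epsilon> g x = 0" unfolding Mavg_def by (rule if_not_P)
  then show ?thesis using False unfolding cell_mean_def by simp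
qed

lemma integrable_on_subset_powr:
  fixes g :: "'a::euclidean_space \<Rightarrow> 'b::euclidean_space"
  assumes Q[measurable]: "Q \<in> sets lebesgue" and Q_fin: "emeasure lebesgue Q < \<infinity>" and Q\<Omega>: "Q \<subseteq> \<Omega>"
    and p: "1 \<le> p"
    and gm: "(\<lambda>x. indicator \<Omega> x *\<^sub>R g x) \<in> borel_measurable lebesgue"
    and gi: "integrable lebesgue (\<lambda>x. indicator \<Omega> x * norm (g x) powr p)"
  shows "integrable lebesgue (\<lambda>x. indicator Q x * norm (g x) powr p)"
    and "integrable lebesgue (\<lambda>x. indicator Q x * norm (g x))"
proof -
  have restrict: "(\<lambda>x. indicator Q x * h (norm (g x))) = (\<lambda>x. indicator Q x * h (norm (indicator \<Omega> x *\<^sub>R g x)))"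
    for h :: "real \<Rightarrow> real"
    using Q\<Omega> by (auto simp: indicator_def fun_eq_iff)
  have [measurable]: "(\<lambda>x. norm (indicator \<Omega> x *\<^sub>R g x)) \<in> borel_measurable lebesgue" using gm by measurable
  have "integrable lebesgue (\<lambda>x. indicator Q x * norm (indicator \<Omega> x *\<^sub>R g x) powr p)"
  proof (rule Bochner_Integration.integrable_bound[OF gi])
    show "(\<lambda>x. indicator Q x * norm (indicator \<Omega> x *\<^sub>R g x) powr p) \<in> borel_measurable lebesgue"
      by measurable
  qed (use Q\<Omega> in \<open>auto intro!: AE_I2 simp: indicator_def\<close>)
  then show pi: "integrable lebesgue (\<lambda>x. indicator Q x * norm (g x) powr p)"
    by (subst restrict[where h="\<lambda>t. t powr p"])
  have "integrable lebesgue (\<lambda>x. indicator Q x * norm (indicator \<Omega> x *\<^sub>R g x))"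
  proof (rule Bochner_Integration.integrable_bound[where f = "\<lambda>x. indicator Q x + indicator Q x * norm (g x) powr p"])
    show "integrable lebesgue (\<lambda>x. indicator Q x + indicator Q x * norm (g x) powr p)"
      using Q_fin pi by auto
    show "AE x in lebesgue. norm (indicator Q x * norm (indicator \<Omega> x *\<^sub>R g x))
        \<le> norm (indicator Q x + indicator Q x * norm (g x) powr p)"
      using le_one_plus_powr[OF norm_ge_zero p] Q\<Omega> by (intro AE_I2) (auto simp: indicator_def)
    show "(\<lambda>x. indicator Q x * norm (indicator \<Omega> x *\<^sub>R g x)) \<in> borel_measurable lebesgue"
      by measurable
  qed
  then show "integrable lebesgue (\<lambda>x. indicator Q x * norm (g x))"
    by (subst restrict[where h="\<lambda>t. t"])
qed

lemma cell_mean_bound: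
  fixes g :: "('n::finite) pt \<Rightarrow> 'n pt"
  assumes e: "\<epsilon> > 0" and p: "1 \<le> p"
    and gm: "(\<lambda>x. indicator \<Omega> x *\<^sub>R g x) \<in> borel_measurable lebesgue"
    and gi: "integrable lebesgue (\<lambda>x. indicator \<Omega> x * norm (g x) powr p)"
  shows "\<epsilon> ^ CARD('n) * norm (cell_mean \<Omega> \<epsilon> g k) powr p
      \<le> (\<integral>x. indicator (eps_cell \<epsilon> k) x * (indicator \<Omega> x * norm (g x) powr p) \<partial>lebesgue)"
proof (cases "eps_cell \<epsilon> k \<subseteq> \<Omega>")
  case False
  then show ?thesis using p by (simp add: cell_mean_def)
next
  case True
  define Q where "Q = eps_cell \<epsilon> k"
  have Q_meas: "measure lebesgue Q = \<epsilon> ^ CARD('n)" unfolding Q_def by (rule eps_cell_measure[OF e])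
  have Q_fin: "emeasure lebesgue Q < \<infinity>" unfolding Q_def by (subst eps_cell_emeasure[OF e]) simp
  have Q_pos: "0 < measure lebesgue Q" using Q_meas e by simp
  have restrict: "(\<lambda>x. indicator Q x * (indicator \<Omega> x * norm (g x) powr p))
      = (\<lambda>x. indicator Q x * norm (g x) powr p)"
    using True by (auto simp: Q_def indicator_def fun_eq_iff)
  note int = integrable_on_subset_powr[of Q, OF _ Q_fin _ p gm gi]
  have "norm (LINT y:Q|lebesgue. g y) \<le> (\<integral>y. norm (indicator Q y *\<^sub>R g y) \<partial>lebesgue)"
    unfolding set_lebesgue_integral_def by (rule integral_norm_bound)
  then have "norm (cell_mean \<Omega> \<epsilon> g k) \<le> (\<integral>y. indicator Q y * norm (g y) \<partial>lebesgue) / measure lebesgue Q"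
    using True Q_pos e by (simp add: cell_mean_def Q_meas[symmetric] Q_def divide_right_mono)
  then have "norm (cell_mean \<Omega> \<epsilon> g k) powr p
      \<le> ((\<integral>y. indicator Q y * norm (g y) \<partial>lebesgue) / measure lebesgue Q) powr p"
    using p by (intro powr_mono2) auto
  also have "\<dots> \<le> (\<integral>x. indicator Q x * norm (g x) powr p \<partial>lebesgue) / measure lebesgue Q"
    using jensen_set[OF _ Q_pos Q_fin _ int(2) int(1) p] True by (simp add: Q_def)
  finally have "measure lebesgue Q * norm (cell_mean \<Omega> \<epsilon> g k) powr p
      \<le> (\<integral>x. indicator Q x * norm (g x) powr p \<partial>lebesgue)"
    using Q_pos by (simp add: field_simps)
  then show ?thesis unfolding Q_def[symmetric] restrict Q_meas .
qed

lemma cells_sum: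
  fixes f :: "('n::finite) pt \<Rightarrow> real"
  assumes e: "\<epsilon> > 0" and K: "finite K"
    and f0: "\<And>x. 0 \<le> f x" and fi: "integrable lebesgue f"
  shows "(\<Sum>k\<in>K. \<integral>x. indicator (eps_cell \<epsilon> k) x * f x \<partial>lebesgue) \<le> (\<integral>x. f x \<partial>lebesgue)"
proof -
  have ik: "integrable lebesgue (\<lambda>x. indicator (eps_cell \<epsilon> k) x * f x)" for k
    using integrable_real_mult_indicator[OF eps_cell_sets fi] by (simp add: mult.commute)
  have le: "(\<Sum>k\<in>K. indicator (eps_cell \<epsilon> k) x * f x) \<le> f x" for x
  proof (cases "\<exists>k\<in>K. x \<in> eps_cell \<epsilon> k")
    case True
    then obtain k0 where k0: "k0 \<in> K" "x \<in> eps_cell \<epsilon> k0" by blast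
    have "indicator (eps_cell \<epsilon> k) x * f x = (if k = k0 then f x else 0)" for k
    proof (cases "x \<in> eps_cell \<epsilon> k")
      case True
      then show ?thesis using eps_cell_disj[OF e True k0(2)] by simp
    qed (use k0(2) in auto)
    then show ?thesis using k0(1) K by simp
  next
    case False
    then show ?thesis using f0[of x] by (simp add: sum.neutral)
  qed
  have "(\<Sum>k\<in>K. \<integral>x. indicator (eps_cell \<epsilon> k) x * f x \<partial>lebesgue)
      = (\<integral>x. (\<Sum>k\<in>K. indicator (eps_cell \<epsilon> k) x * f x) \<partial>lebesgue)"
    by (rule Bochner_Integration.integral_sum[symmetric]) (rule ik)
  also have "\<dots> \<le> (\<integral>x. f x \<partial>lebesgue)"
    using ik fi le by (intro integral_mono) auto
  finally show ?thesis .
qed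

lemma cell_means_sum_bound:
  fixes g :: "('n::finite) pt \<Rightarrow> 'n pt"
  assumes e: "\<epsilon> > 0" and K: "finite K" and p: "1 \<le> p"
    and gm: "(\<lambda>x. indicator \<Omega> x *\<^sub>R g x) \<in> borel_measurable lebesgue"
    and gi: "integrable lebesgue (\<lambda>x. indicator \<Omega> x * norm (g x) powr p)"
  shows "(\<Sum>k\<in>K. \<epsilon> ^ CARD('n) * norm (cell_mean \<Omega> \<epsilon> g k) powr p)
      \<le> (\<integral>x. indicator \<Omega> x * norm (g x) powr p \<partial>lebesgue)"
proof -
  have "(\<Sum>k\<in>K. \<epsilon> ^ CARD('n) * norm (cell_mean \<Omega> \<epsilon> g k) powr p)
      \<le> (\<Sum>k\<in>K. \<integral>x. indicator (eps_cell \<epsilon> k) x * (indicator \<Omega> x * norm (g x) powr p) \<partial>lebesgue)"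
    by (intro sum_mono cell_mean_bound[OF e p gm gi])
  also have "\<dots> \<le> (\<integral>x. indicator \<Omega> x * norm (g x) powr p \<partial>lebesgue)"
    by (rule cells_sum[OF e K _ gi]) simp
  finally show ?thesis .
qed

section \<open>The uniform energy bound\<close>

text \<open>For each \<open>\<epsilon>\<close>, the energy of \<open>P\<^sub>\<epsilon>(x, M\<^sub>\<epsilon>\<nabla>u(x))\<close> over \<open>\<Omega>\<close>, measured with the
  phase-dependent exponent, is bounded by \<open>K (\<parallel>\<nabla>u\<parallel>\<^sub>p\<^sub>1\<^sup>p\<^sup>1 + \<parallel>\<nabla>u\<parallel>\<^sub>p\<^sub>2\<^sup>p\<^sup>2)\<close>: on each cell meeting
  \<open>\<Omega>\<close>, \<open>M\<^sub>\<epsilon>\<nabla>u\<close> is a constant vector, so the scaled cell estimate and Jensen apply.\<close>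
lemma corrector_energy_bound:
  fixes \<Omega> E :: "('n::finite) pt set" and Du :: "'n pt \<Rightarrow> 'n pt"
  assumes e: "\<epsilon> > 0" and \<Omega>: "bounded \<Omega>" and s: "0 < s1" "0 < s2" and p: "1 < p1" "p1 \<le> p2"
    and micro: "dispersed E \<or> layered E" and cell: "cell_solutions E s1 s2 p1 p2 v Dv"
    and Du_meas: "(\<lambda>x. indicator \<Omega> x *\<^sub>R Du x) \<in> borel_measurable lebesgue"
    and Du_int: "integrable lebesgue (\<lambda>x. indicator \<Omega> x * norm (Du x) powr p1)"
      "integrable lebesgue (\<lambda>x. indicator \<Omega> x * norm (Du x) powr p2)"
  shows "(\<integral>\<^sup>+ x. ennreal (norm (Mavg \<Omega> \<epsilon> Du x + Dv (Mavg \<Omega> \<epsilon> Du x) ((1/\<epsilon>) *\<^sub>R x))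
             powr pexp E p1 p2 ((1/\<epsilon>) *\<^sub>R x)) * indicator \<Omega> x \<partial>lebesgue)
    \<le> ennreal (cell_const s1 s2 p2 * ((\<integral>x. indicator \<Omega> x * norm (Du x) powr p1 \<partial>lebesgue)
                                      + (\<integral>x. indicator \<Omega> x * norm (Du x) powr p2 \<partial>lebesgue)))"
proof -
  define K where "K = {k. eps_cell \<epsilon> k \<inter> \<Omega> \<noteq> {}}"
  have K_fin: "finite K" unfolding K_def by (rule finite_cells[OF e \<Omega>])
  define G where "G = (\<lambda>\<xi> y. norm (\<xi> + Dv \<xi> y) powr pexp E p1 p2 y)"
  define \<xi> where "\<xi> = cell_mean \<Omega> \<epsilon> Du"
  define T where "T = (\<lambda>k x. ennreal (indicator (eps_cell \<epsilon> k) x * G (\<xi> k) ((1/\<epsilon>) *\<^sub>R x)))"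
  note cell_est = scaled_cell_energy[OF e s p micro cell]
  have "AE x in lebesgue. ennreal (G (Mavg \<Omega> \<epsilon> Du x) ((1/\<epsilon>) *\<^sub>R x)) * indicator \<Omega> x \<le> (\<Sum>k\<in>K. T k x)"
    using AE_in_cell[OF e]
  proof eventually_elim
    case (elim x)
    then obtain k where k: "x \<in> eps_cell \<epsilon> k" by blast
    show ?case
    proof (cases "x \<in> \<Omega>")
      case True
      then have "k \<in> K" using k unfolding K_def by blast
      moreover have "ennreal (G (Mavg \<Omega> \<epsilon> Du x) ((1/\<epsilon>) *\<^sub>R x)) * indicator \<Omega> x = T k x"
        using True k Mavg_on_cell[OF e k] unfolding T_def \<xi>_def by simp
      ultimately show ?thesis by (metis K_fin member_le_sum zero_le)
    qed simp
  qed
  then have "(\<integral>\<^sup>+ x. ennreal (G (Mavg \<Omega> \<epsilon> Du x) ((1/\<epsilon>) *\<^sub>R x)) * indicator \<Omega> x \<partial>lebesgue)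
      \<le> (\<Sum>k\<in>K. integral\<^sup>N lebesgue (T k))"
    using cell_est(2) by (subst nn_integral_sum[symmetric]) (auto simp: T_def G_def intro: nn_integral_mono_AE)
  also have "\<dots> \<le> (\<Sum>k\<in>K. ennreal (\<epsilon> ^ CARD('n) * (cell_const s1 s2 p2 * (norm (\<xi> k) powr p1 + norm (\<xi> k) powr p2))))"
    using cell_est(1) by (intro sum_mono) (simp add: T_def G_def)
  also have "\<dots> = ennreal (cell_const s1 s2 p2 * ((\<Sum>k\<in>K. \<epsilon> ^ CARD('n) * norm (\<xi> k) powr p1)
                                                  + (\<Sum>k\<in>K. \<epsilon> ^ CARD('n) * norm (\<xi> k) powr p2)))"
    using e s by (subst sum_ennreal) (auto simp: cell_const_nonneg sum_distrib_left sum.distrib algebra_simps)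
  also have "\<dots> \<le> ennreal (cell_const s1 s2 p2 * ((\<integral>x. indicator \<Omega> x * norm (Du x) powr p1 \<partial>lebesgue)
                                                  + (\<integral>x. indicator \<Omega> x * norm (Du x) powr p2 \<partial>lebesgue)))"
    unfolding \<xi>_def using p s
    by (intro ennreal_leI mult_left_mono add_mono cell_means_sum_bound[OF e K_fin _ Du_meas] Du_int cell_const_nonneg)
      auto
  finally show ?thesis by (simp add: G_def)
qed

text \<open>Each is dominated
  by the energy with the phase-dependent exponent, which \<open>corrector_energy_bound\<close> controls
  using only \<open>\<nabla>u \<in> L\<^sup>p\<^sup>1 \<inter> L\<^sup>p\<^sup>2\<close>.\<close>
theorem mainTheorem8:
  fixes \<Omega> E :: "('n::finite) pt set"
    and s1 s2 p1 p2 :: real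
    and v :: "'n pt \<Rightarrow> 'n pt \<Rightarrow> real" and Dv :: "'n pt \<Rightarrow> 'n pt \<Rightarrow> 'n pt"
    and f :: "('n pt \<Rightarrow> real) \<Rightarrow> real"
    and u :: "'n pt \<Rightarrow> real" and Du :: "'n pt \<Rightarrow> 'n pt"
  assumes \<Omega>: "open \<Omega>" "bounded \<Omega>"
    and sig: "0 < s1" "0 < s2"
    and pexps: "(1 < p1 \<and> p1 \<le> p2 \<and> p2 \<le> 2) \<or> (1 < p1 \<and> p1 \<le> 2 \<and> 2 \<le> p2)"
    and micro: "dispersed E \<or> layered E"
    and cell: "cell_solutions E s1 s2 p1 p2 v Dv"
    and f_lin: "\<And>\<phi> g \<psi> h c. W1p0 p1 \<Omega> \<phi> g \<Longrightarrow> W1p0 p1 \<Omega> \<psi> h \<Longrightarrow>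
                  f (\<lambda>x. \<phi> x + \<psi> x) = f \<phi> + f \<psi> \<and> f (\<lambda>x. c * \<phi> x) = c * f \<phi>"
    and f_bdd: "\<exists>C. \<forall>\<phi> g. W1p0 p1 \<Omega> \<phi> g \<longrightarrow> \<bar>f \<phi>\<bar> \<le> C * W1p_norm p1 \<Omega> \<phi> g"
    and u_W0: "W1p0 p1 \<Omega> u Du"
    and u_sol: "\<And>\<phi>. test_fun \<Omega> \<phi> \<Longrightarrow>
                  (LINT x:\<Omega>|lebesgue. bhom E s1 s2 p1 p2 Dv (Du x) \<bullet> grad \<phi> x) = f \<phi>"
    and u_reg: "W1p0 p2 \<Omega> u Du"
  shows "(\<exists>C::real. \<forall>\<epsilon>>0.
           (\<integral>\<^sup>+ x\<in>\<Omega>. ennreal (indicator E ((1/\<epsilon>) *\<^sub>R x) *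
               norm (Mavg \<Omega> \<epsilon> Du x + Dv (Mavg \<Omega> \<epsilon> Du x) ((1/\<epsilon>) *\<^sub>R x)) powr p1) \<partial>lebesgue)
             \<le> ennreal C) \<and>
         (\<exists>C::real. \<forall>\<epsilon>>0.
           (\<integral>\<^sup>+ x\<in>\<Omega>. ennreal ((1 - indicator E ((1/\<epsilon>) *\<^sub>R x)) *
               norm (Mavg \<Omega> \<epsilon> Du x + Dv (Mavg \<Omega> \<epsilon> Du x) ((1/\<epsilon>) *\<^sub>R x)) powr p2) \<partial>lebesgue)
             \<le> ennreal C)"
proof -
  have p: "1 < p1" "p1 \<le> p2" using pexps by auto
  have "Lp p1 \<Omega> Du" "Lp p2 \<Omega> Du"
    using u_W0 u_reg unfolding W1p0_def W1p_def by blast+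
  then have Du_meas: "(\<lambda>x. indicator \<Omega> x *\<^sub>R Du x) \<in> borel_measurable lebesgue"
    and Du_int: "integrable lebesgue (\<lambda>x. indicator \<Omega> x * norm (Du x) powr p1)"
      "integrable lebesgue (\<lambda>x. indicator \<Omega> x * norm (Du x) powr p2)"
    unfolding Lp_def set_borel_measurable_def set_integrable_def by simp_all
  define C where "C = cell_const s1 s2 p2 * ((\<integral>x. indicator \<Omega> x * norm (Du x) powr p1 \<partial>lebesgue)
                                         + (\<integral>x. indicator \<Omega> x * norm (Du x) powr p2 \<partial>lebesgue))"
  note bound = corrector_energy_bound[OF _ \<Omega>(2) sig p micro cell Du_meas Du_int, folded C_def]
  have phase: "ennreal (indicator E y * t powr p1) \<le> ennreal (t powr pexp E p1 p2 y)"
    "ennreal ((1 - indicator E y) * t powr p2) \<le> ennreal (t powr pexp E p1 p2 y)" for y and t :: real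
    by (auto simp: pexp_def indicator_def)
  show ?thesis
    by (intro conjI exI[of _ C] allI impI order_trans[OF nn_integral_mono bound])
      (auto intro: mult_right_mono phase)
qed

end
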